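(* The restriction map $\mathrm{Res}:\mathfrak{P}(\mathfrak{h}^* )\to\mathfrak{P}(\mathfrak{a}^* )$ maps $\Lambda(\mathfrak{h}^* )$ onto $\Lambda^0(\mathfrak{a}^* )$.
   Context: Over $\mathbb{C}$, fix $p,q\ge1$, $\mathfrak{g}=\mathfrak{gl}(2p|2q)$; $A_{a,b}=E_{a,b}$ ($1\le a,b\le2p$), $D_{a,b}=E_{2p+a,2p+b}$ ($1\le a,b\le 2q$). With $\mathsf{i}=\sqrt{-1}$: $x_i=\mathsf{i}(A_{i,p+i}-A_{p+i,i})$, $x'_i=A_{i,i}+A_{p+i,p+i}$ ($1\le i\le p$), $y_j=\mathsf{i}(D_{j,q+j}-D_{q+j,j})$, $y'_j=D_{j,j}+D_{q+j,q+j}$ ($1\le j\le q$); $\mathfrak{a}=\mathrm{span}\{x_i,y_j\}$, $\mathfrak{t}_+=\mathrm{span}\{x'_i,y'_j\}$, $\mathfrak{h}=\mathfrak{a}\oplus\mathfrak{t}_+$. Identify $\mathfrak{a}^*$ with the functionals on $\mathfrak{h}$ vanishing on $\mathfrak{t}_+$, and $\mathfrak{P}(V^* )=\mathfrak{S}(V)$. Then $\mathfrak{P}(\mathfrak{h}^* )=\mathbb{C}[x_{\pm i},y_{\pm j}]$ with $x_{\pm i}=\tfrac12(x'_i\pm x_i)$, $y_{\pm j}=\tfrac12(y'_j\pm y_j)$, and $\mathfrak{P}(\mathfrak{a}^* )=\mathbb{C}[x_i,y_j]$; $\mathrm{Res}$ restricts a polynomial on $\mathfrak{h}^*$ to $\mathfrak{a}^*$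 (equivalently it is induced by the projection $\mathfrak{h}\to\mathfrak{a}$ along $\mathfrak{t}_+$). $\Lambda(\mathfrak{h}^* )$ consists of polynomials symmetric separately in the $2p$ variables $x_{\pm i}$ and in the $2q$ variables $y_{\pm j}$ such that $f|_{x_{+1}=t,\,y_{+1}=-t}$ is independent of $t$. $\Lambda^0(\mathfrak{a}^* )$ consists of $f\in\mathbb{C}[x_i,y_j]$ invariant under permutations of the $x_i$, permutations of the $y_j$, and sign changes of each variable, such that $f|_{x_1=t,\,y_1=-t}$ is independent of $t$. *)

theory Defs
  imports Complex_Main "HOL-Combinatorics.Permutations"
begin

text \<open>Variables. On h*: X k (k < 2p) with X (i-1) = x_{+i}, X (p+i-1) = x_{-i};
  Y k (k < 2q) with Y (j-1) = y_{+j}, Y (q+j-1) = y_{-j}.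
  On a*: X (i-1) = x_i (i \<le> p), Y (j-1) = y_j (j \<le> q).\<close>
datatype var = X nat | Y nat

text \<open>Polynomial functions over the complex numbers in the variables from V
  (over an infinite field these are the same as polynomials).\<close>
inductive_set mpoly_fun :: "var set \<Rightarrow> ((var \<Rightarrow> complex) \<Rightarrow> complex) set"
  for V :: "var set" where
  const: "(\<lambda>a. c) \<in> mpoly_fun V"
| var: "v \<in> V \<Longrightarrow> (\<lambda>a. a v) \<in> mpoly_fun V"
| add: "f \<in> mpoly_fun V \<Longrightarrow> g \<in> mpoly_fun V \<Longrightarrow> (\<lambda>a. f a + g a) \<in> mpoly_fun V"
| mult: "f \<in> mpoly_fun V \<Longrightarrow> g \<in> mpoly_fun V \<Longrightarrow> (\<lambda>a. f a * g a) \<in> mpoly_fun V"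

definition hvars :: "nat \<Rightarrow> nat \<Rightarrow> var set" where
  "hvars p q = X ` {..<2*p} \<union> Y ` {..<2*q}"

definition avars :: "nat \<Rightarrow> nat \<Rightarrow> var set" where
  "avars p q = X ` {..<p} \<union> Y ` {..<q}"

definition permX :: "(nat \<Rightarrow> nat) \<Rightarrow> (var \<Rightarrow> complex) \<Rightarrow> var \<Rightarrow> complex" where
  "permX \<sigma> a = (\<lambda>v. case v of X k \<Rightarrow> a (X (\<sigma> k)) | Y k \<Rightarrow> a (Y k))"

definition permY :: "(nat \<Rightarrow> nat) \<Rightarrow> (var \<Rightarrow> complex) \<Rightarrow> var \<Rightarrow> complex" where
  "permY \<sigma> a = (\<lambda>v. case v of X k \<Rightarrow> a (X k) | Y k \<Rightarrow> a (Y (\<sigma> k)))"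

definition Lambda_h :: "nat \<Rightarrow> nat \<Rightarrow> ((var \<Rightarrow> complex) \<Rightarrow> complex) set" where
  "Lambda_h p q = {f \<in> mpoly_fun (hvars p q).
      (\<forall>\<sigma> a. \<sigma> permutes {..<2*p} \<longrightarrow> f (permX \<sigma> a) = f a) \<and>
      (\<forall>\<sigma> a. \<sigma> permutes {..<2*q} \<longrightarrow> f (permY \<sigma> a) = f a) \<and>
      (\<forall>a t s. f (a(X 0 := t, Y 0 := - t)) = f (a(X 0 := s, Y 0 := - s)))}"

definition Lambda0_a :: "nat \<Rightarrow> nat \<Rightarrow> ((var \<Rightarrow> complex) \<Rightarrow> complex) set" where
  "Lambda0_a p q = {f \<in> mpoly_fun (avars p q).
      (\<forall>\<sigma> a. \<sigma> permutes {..<p} \<longrightarrow> f (permX \<sigma> a) = f a) \<and>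
      (\<forall>\<sigma> a. \<sigma> permutes {..<q} \<longrightarrow> f (permY \<sigma> a) = f a) \<and>
      (\<forall>v\<in>avars p q. \<forall>a. f (a(v := - a v)) = f a) \<and>
      (\<forall>a t s. f (a(X 0 := t, Y 0 := - t)) = f (a(X 0 := s, Y 0 := - s)))}"

text \<open>Restriction: induced by the projection h \<rightarrow> a along t_+, i.e. x'_i = y'_j = 0,
  so x_{\<pm>i} = \<pm> x_i/2, y_{\<pm>j} = \<pm> y_j/2.\<close>
definition restr_pt :: "nat \<Rightarrow> nat \<Rightarrow> (var \<Rightarrow> complex) \<Rightarrow> var \<Rightarrow> complex" where
  "restr_pt p q b = (\<lambda>v. case v of
      X k \<Rightarrow> (if k < p then b (X k) / 2 else - b (X (k - p)) / 2)
    | Y k \<Rightarrow> (if k < q then b (Y k) / 2 else - b (Y (k - q)) / 2))"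

definition Res :: "nat \<Rightarrow> nat \<Rightarrow> ((var \<Rightarrow> complex) \<Rightarrow> complex) \<Rightarrow> (var \<Rightarrow> complex) \<Rightarrow> complex" where
  "Res p q f = (\<lambda>b. f (restr_pt p q b))"

end

theory Submission
  imports Defs "Jordan_Normal_Form.Determinant" "HOL-Computational_Algebra.Polynomial_FPS"
begin

text \<open>Let \<open>E(t) = \<Prod>(1 - x\<^sub>i t) / \<Prod>(1 - y\<^sub>j t)\<close>. The heart of the proof is the classical fact
  that the supersymmetric polynomials in \<open>x\<^sub>1,\<dots>,x\<^sub>n, y\<^sub>1,\<dots>,y\<^sub>m\<close> (symmetric in \<open>x\<close> and in \<open>y\<close>,
  and independent of \<open>s\<close> when \<open>x\<^sub>1 = y\<^sub>1 = s\<close>) are polynomials in the coefficients of \<open>E\<close>.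
  By induction on \<open>n\<close>: a supersymmetric \<open>f\<close> agrees at \<open>x\<^sub>n = 0\<close> with such a polynomial \<open>G\<close>;
  by symmetry and cancellation \<open>f - G\<close> then vanishes on every hyperplane \<open>y\<^sub>j = x\<^sub>i\<close>, so it is
  \<open>\<Delta> \<cdot> k\<close> with \<open>\<Delta> = \<Prod>(y\<^sub>j - x\<^sub>i)\<close> and \<open>k\<close> symmetric in \<open>x\<close> and in \<open>y\<close>. Such products are
  polynomials in the coefficients of \<open>E\<close>: for \<open>k\<close> depending on \<open>y\<close> only, by a bialternant formula
  for determinants of coefficients of \<open>t\<^sup>m\<^sup>-\<^sup>1 E(t)\<close>, whose case \<open>n = 0\<close> is the fundamental theorem
  on symmetric polynomials; the general case follows by separating the variables.

  An element of \<open>\<Lambda>\<^sup>0(a\<^sup>*)\<close> is even in every variable, hence of the form \<open>F(x\<^sup>2, y\<^sup>2)\<close> with \<open>F\<close>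
  supersymmetric, and \<open>Res\<close> maps the coefficient of \<open>t\<^sup>2\<^sup>r\<close> in
  \<open>\<Prod>(1 - 2x\<^sub>\<plusminus>\<^sub>i t) / \<Prod>(1 + 2y\<^sub>\<plusminus>\<^sub>j t)\<close>, an element of \<open>\<Lambda>(h\<^sup>*)\<close>, to the coefficient of \<open>t\<^sup>r\<close> of
  \<open>E\<close> at \<open>(x\<^sup>2, y\<^sup>2)\<close>. Conversely \<open>Res\<close> lands in \<open>\<Lambda>\<^sup>0(a\<^sup>*)\<close> because permutations and sign changes
  of the \<open>x\<^sub>i, y\<^sub>j\<close> lift to permutations of the \<open>x\<^sub>\<plusminus>\<^sub>i, y\<^sub>\<plusminus>\<^sub>j\<close>.\<close>

section \<open>Subalgebras of functions\<close>

type_synonym point = "var \<Rightarrow> complex"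
type_synonym pfun = "point \<Rightarrow> complex"

definition subalgebra :: "pfun set \<Rightarrow> bool" where
  "subalgebra S \<longleftrightarrow> (\<forall>c. (\<lambda>a. c) \<in> S) \<and> (\<forall>f\<in>S. \<forall>g\<in>S. (\<lambda>a. f a + g a) \<in> S)
     \<and> (\<forall>f\<in>S. \<forall>g\<in>S. (\<lambda>a. f a * g a) \<in> S)"

definition coeffs_in :: "pfun set \<Rightarrow> (point \<Rightarrow> complex fps) \<Rightarrow> bool" where
  "coeffs_in S F \<longleftrightarrow> (\<forall>k. (\<lambda>a. fps_nth (F a) k) \<in> S)"

context
  fixes S :: "pfun set"
  assumes S: "subalgebra S"
begin

lemma subalgebra_const: "(\<lambda>a. c) \<in> S"
  using S unfolding subalgebra_def by blast

lemma subalgebra_add: "f \<in> S \<Longrightarrow> g \<in> S \<Longrightarrow> (\<lambda>a. f a + g a) \<in> S"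
  using S unfolding subalgebra_def by blast

lemma subalgebra_mult: "f \<in> S \<Longrightarrow> g \<in> S \<Longrightarrow> (\<lambda>a. f a * g a) \<in> S"
  using S unfolding subalgebra_def by blast

lemma subalgebra_cmult: "f \<in> S \<Longrightarrow> (\<lambda>a. c * f a) \<in> S"
  by (rule subalgebra_mult[OF subalgebra_const])

lemma subalgebra_diff: "f \<in> S \<Longrightarrow> g \<in> S \<Longrightarrow> (\<lambda>a. f a - g a) \<in> S"
  using subalgebra_add[of f "\<lambda>a. - 1 * g a"] subalgebra_cmult[of g "- 1"] by simp

lemma subalgebra_sum: "(\<And>i. i \<in> I \<Longrightarrow> F i \<in> S) \<Longrightarrow> (\<lambda>a. \<Sum>i\<in>I. F i a) \<in> S"
  by (induction I rule: infinite_finite_induct) (simp_all add: subalgebra_const subalgebra_add)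

lemma subalgebra_prod: "(\<And>i. i \<in> I \<Longrightarrow> F i \<in> S) \<Longrightarrow> (\<lambda>a. \<Prod>i\<in>I. F i a) \<in> S"
  by (induction I rule: infinite_finite_induct) (simp_all add: subalgebra_const subalgebra_mult)

lemma subalgebra_power: "f \<in> S \<Longrightarrow> (\<lambda>a. f a ^ k) \<in> S"
  using subalgebra_prod[of "{..<k}" "\<lambda>_. f"] by simp

lemma subalgebra_sum_list: "(\<And>x. x \<in> set xs \<Longrightarrow> F x \<in> S) \<Longrightarrow> (\<lambda>a. \<Sum>x\<leftarrow>xs. F x a) \<in> S"
  by (induction xs) (simp_all add: subalgebra_const subalgebra_add)

lemma coeffs_in_mult: "coeffs_in S F \<Longrightarrow> coeffs_in S G \<Longrightarrow> coeffs_in S (\<lambda>a. F a * G a)"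
  unfolding coeffs_in_def fps_mult_nth by (intro allI subalgebra_sum subalgebra_mult) auto

lemma coeffs_in_prod: "(\<And>i. i \<in> I \<Longrightarrow> coeffs_in S (F i)) \<Longrightarrow> coeffs_in S (\<lambda>a. \<Prod>i\<in>I. F i a)"
proof (induction I rule: infinite_finite_induct)
  case (insert i I)
  then show ?case using coeffs_in_mult[of "F i" "\<lambda>a. \<Prod>i\<in>I. F i a"] by simp
qed (simp_all add: coeffs_in_def subalgebra_const)

lemma coeffs_in_inverse:
  assumes F: "coeffs_in S F" and F0: "\<And>a. fps_nth (F a) 0 = 1"
  shows "coeffs_in S (\<lambda>a. inverse (F a))"
  unfolding coeffs_in_def
proof
  fix k show "(\<lambda>a. fps_nth (inverse (F a)) k) \<in> S"
  proof (induction k rule: less_induct)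
    case (less k)
    show ?case
    proof (cases k)
      case 0
      then show ?thesis using F0 by (simp add: subalgebra_const)
    next
      case (Suc k')
      have rec: "fps_nth (inverse (F a)) k
          = - (\<Sum>i\<in>{1..k}. fps_nth (F a) i * fps_nth (inverse (F a)) (k - i))" for a
      proof -
        have "fps_nth (F a * inverse (F a)) k = 0"
          using inverse_mult_eq_1'[of "F a"] F0 Suc by simp
        moreover have "{0..k} = insert 0 {1..k}" by auto
        ultimately show ?thesis
          using F0[of a] by (simp add: fps_mult_nth eq_neg_iff_add_eq_0 add.commute)
      qed
      have "(\<lambda>a. - 1 * (\<Sum>i\<in>{1..k}. fps_nth (F a) i * fps_nth (inverse (F a)) (k - i))) \<in> S"
        using less F Suc unfolding coeffs_in_def
        by (intro subalgebra_cmult subalgebra_sum subalgebra_mult) auto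
      then show ?thesis by (subst rec) simp
    qed
  qed
qed

lemma coeffs_in_linear: "L \<in> S \<Longrightarrow> coeffs_in S (\<lambda>a. 1 - fps_const (L a) * fps_X)"
  unfolding coeffs_in_def
proof
  fix k assume L: "L \<in> S"
  have "(\<lambda>a. fps_nth (1 - fps_const (L a) * fps_X) k)
      = (\<lambda>a. (if k = 0 then 1 else 0) - (if k = 1 then 1 else 0) * L a)"
    by (auto simp: fps_X_def)
  also have "\<dots> \<in> S" by (intro subalgebra_diff subalgebra_const subalgebra_cmult L)
  finally show "(\<lambda>a. fps_nth (1 - fps_const (L a) * fps_X) k) \<in> S" .
qed

end

lemma fps_nth_prod_linear_0: "fps_nth (\<Prod>i\<in>I. 1 - fps_const (c i) * fps_X) 0 = (1::complex)"
  by (induction I rule: infinite_finite_induct) auto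

lemma subalgebra_vimage_comp: "subalgebra T \<Longrightarrow> subalgebra {f. (\<lambda>a. f (\<phi> a)) \<in> T}"
  unfolding subalgebra_def by simp

lemma subalgebra_image_comp:
  assumes "subalgebra S"
  shows "subalgebra ((\<lambda>f a. f (\<phi> a)) ` S)"
  unfolding subalgebra_def
proof safe
  fix c show "(\<lambda>a. c) \<in> (\<lambda>f a. f (\<phi> a)) ` S"
    using subalgebra_const[OF assms] by (intro image_eqI) auto
next
  fix f g assume "f \<in> S" "g \<in> S"
  then show "(\<lambda>a. f (\<phi> a) + g (\<phi> a)) \<in> (\<lambda>f a. f (\<phi> a)) ` S"
    and "(\<lambda>a. f (\<phi> a) * g (\<phi> a)) \<in> (\<lambda>f a. f (\<phi> a)) ` S"
    using subalgebra_add[OF assms] subalgebra_mult[OF assms] by (auto intro: image_eqI)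
qed

inductive_set alg_gen :: "pfun set \<Rightarrow> pfun set" for G where
  const: "(\<lambda>a. c) \<in> alg_gen G"
| gen: "g \<in> G \<Longrightarrow> g \<in> alg_gen G"
| add: "f \<in> alg_gen G \<Longrightarrow> g \<in> alg_gen G \<Longrightarrow> (\<lambda>a. f a + g a) \<in> alg_gen G"
| mult: "f \<in> alg_gen G \<Longrightarrow> g \<in> alg_gen G \<Longrightarrow> (\<lambda>a. f a * g a) \<in> alg_gen G"

lemma subalgebra_alg_gen: "subalgebra (alg_gen G)"
  unfolding subalgebra_def by (auto intro: alg_gen.intros)

lemma alg_gen_minimal:
  assumes "subalgebra T" "G \<subseteq> T"
  shows "alg_gen G \<subseteq> T"
proof
  fix f assume "f \<in> alg_gen G"
  then show "f \<in> T"
    by induction (use assms in \<open>auto intro: subalgebra_const subalgebra_add subalgebra_mult\<close>)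
qed

text \<open>If \<open>d \<cdot> S \<subseteq> T\<close>, then \<open>d\<close> times the algebra generated by \<open>T \<union> S\<close> lies in \<open>T\<close>: the
  multipliers \<open>k\<close> preserving \<open>d \<cdot> f \<cdot> S \<subseteq> T\<close> form a subalgebra containing \<open>T\<close> and \<open>S\<close>.\<close>
lemma alg_gen_union_mult:
  assumes T: "subalgebra T" and S: "subalgebra S"
    and d: "\<And>s. s \<in> S \<Longrightarrow> (\<lambda>a. d a * s a) \<in> T" and k: "k \<in> alg_gen (T \<union> S)"
  shows "(\<lambda>a. d a * k a) \<in> T"
proof -
  define P where "P f \<longleftrightarrow> (\<forall>s\<in>S. (\<lambda>a. d a * f a * s a) \<in> T)" for f
  define M where "M = {k. \<forall>f. P f \<longrightarrow> P (\<lambda>a. k a * f a)}"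
  have "subalgebra M"
    unfolding subalgebra_def M_def
  proof safe
    fix c f assume "P f"
    then show "P (\<lambda>a. c * f a)"
      unfolding P_def using subalgebra_cmult[OF T, of _ c] by (simp add: mult_ac)
  next
    fix k1 k2 f assume "\<forall>f. P f \<longrightarrow> P (\<lambda>a. k1 a * f a)" "\<forall>f. P f \<longrightarrow> P (\<lambda>a. k2 a * f a)" "P f"
    then have "P (\<lambda>a. k1 a * f a)" "P (\<lambda>a. k2 a * f a)" "P (\<lambda>a. k1 a * (k2 a * f a))" by blast+
    then show "P (\<lambda>a. (k1 a + k2 a) * f a)" "P (\<lambda>a. k1 a * k2 a * f a)"
      unfolding P_def using subalgebra_add[OF T] by (auto simp: algebra_simps)
  qed
  moreover have "T \<union> S \<subseteq> M"
  proof safe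
    fix t assume t: "t \<in> T"
    have "P (\<lambda>a. t a * f a)" if "P f" for f
      unfolding P_def
    proof
      fix s assume "s \<in> S"
      then have "(\<lambda>a. d a * f a * s a) \<in> T" using \<open>P f\<close> unfolding P_def by blast
      then have "(\<lambda>a. t a * (d a * f a * s a)) \<in> T" by (rule subalgebra_mult[OF T t])
      then show "(\<lambda>a. d a * (t a * f a) * s a) \<in> T" by (simp add: mult_ac)
    qed
    then show "t \<in> M" unfolding M_def by blast
  next
    fix g assume g: "g \<in> S"
    have "P (\<lambda>a. g a * f a)" if "P f" for f
      unfolding P_def
    proof
      fix s assume "s \<in> S"
      then have gs: "(\<lambda>a. g a * s a) \<in> S" by (rule subalgebra_mult[OF S g])
      have "(\<lambda>a. d a * f a * (g a * s a)) \<in> T" using \<open>P f\<close> gs unfolding P_def by (rule bspec)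
      then show "(\<lambda>a. d a * (g a * f a) * s a) \<in> T" by (simp add: mult_ac)
    qed
    then show "g \<in> M" unfolding M_def by blast
  qed
  ultimately have "k \<in> M" using k alg_gen_minimal by blast
  moreover have "P (\<lambda>a. 1)" unfolding P_def using d by simp
  ultimately have "P (\<lambda>a. k a * 1)" unfolding M_def by blast
  then have "(\<lambda>a. d a * (k a * 1) * 1) \<in> T"
    unfolding P_def using subalgebra_const[OF S, of 1] by (rule bspec)
  then show ?thesis by simp
qed

section \<open>Polynomial functions\<close>

lemma subalgebra_mpoly_fun: "subalgebra (mpoly_fun V)"
  unfolding subalgebra_def by (auto intro: mpoly_fun.intros)

lemmas mpoly_fun_const = subalgebra_const[OF subalgebra_mpoly_fun]
  and mpoly_fun_add = subalgebra_add[OF subalgebra_mpoly_fun]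
  and mpoly_fun_mult = subalgebra_mult[OF subalgebra_mpoly_fun]
  and mpoly_fun_cmult = subalgebra_cmult[OF subalgebra_mpoly_fun]
  and mpoly_fun_diff = subalgebra_diff[OF subalgebra_mpoly_fun]
  and mpoly_fun_sum = subalgebra_sum[OF subalgebra_mpoly_fun]
  and mpoly_fun_prod = subalgebra_prod[OF subalgebra_mpoly_fun]
  and mpoly_fun_power = subalgebra_power[OF subalgebra_mpoly_fun]
  and mpoly_fun_sum_list = subalgebra_sum_list[OF subalgebra_mpoly_fun]

lemma mpoly_fun_mono: "f \<in> mpoly_fun V \<Longrightarrow> V \<subseteq> W \<Longrightarrow> f \<in> mpoly_fun W"
  by (induction rule: mpoly_fun.induct) (auto intro: mpoly_fun.intros)

lemma mpoly_fun_subst: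
  assumes "f \<in> mpoly_fun V" "\<And>v. v \<in> V \<Longrightarrow> (\<lambda>a. T a v) \<in> mpoly_fun W"
  shows "(\<lambda>a. f (T a)) \<in> mpoly_fun W"
  using assms by (induction rule: mpoly_fun.induct) (auto intro: mpoly_fun.intros)

lemma mpoly_fun_cong:
  assumes "f \<in> mpoly_fun V" "\<And>v. v \<in> V \<Longrightarrow> a v = b v"
  shows "f a = f b"
  using assms by (induction rule: mpoly_fun.induct) auto

lemma mpoly_fun_empty: "f \<in> mpoly_fun {} \<Longrightarrow> \<exists>c. f = (\<lambda>a. c)"
  using mpoly_fun_cong[of f "{}"] by blast

lemma mpoly_fun_line: "f \<in> mpoly_fun V \<Longrightarrow> \<exists>P. \<forall>e. f (\<lambda>v. a v + e * b v) = poly P e"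
proof (induction rule: mpoly_fun.induct)
  case (const c)
  show ?case by (intro exI[of _ "[:c:]"]) simp
next
  case (var v)
  show ?case by (intro exI[of _ "[:a v, b v:]"]) (simp add: algebra_simps)
next
  case (add f g)
  then obtain P Q where "\<forall>e. f (\<lambda>v. a v + e * b v) = poly P e" "\<forall>e. g (\<lambda>v. a v + e * b v) = poly Q e"
    by blast
  then show ?case by (intro exI[of _ "P + Q"]) simp
next
  case (mult f g)
  then obtain P Q where "\<forall>e. f (\<lambda>v. a v + e * b v) = poly P e" "\<forall>e. g (\<lambda>v. a v + e * b v) = poly Q e"
    by blast
  then show ?case by (intro exI[of _ "P * Q"]) simp
qed

lemma mpoly_fun_zero_on_line:
  assumes "f \<in> mpoly_fun V" "finite S" "\<And>e. e \<notin> S \<Longrightarrow> f (\<lambda>v. a v + e * b v) = 0"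
  shows "f a = 0"
proof -
  obtain P where P: "\<And>e. f (\<lambda>v. a v + e * b v) = poly P e"
    using mpoly_fun_line[OF assms(1)] by blast
  have "- S \<subseteq> {x. poly P x = 0}" using assms(3) P by auto
  moreover have "infinite (- S)"
    using assms(2) infinite_UNIV_char_0 by (metis Compl_partition2 finite_UnI)
  ultimately have "P = 0" using poly_roots_finite finite_subset by blast
  then show ?thesis using P[of 0] by simp
qed

lemma mpoly_fun_eq_on_line:
  assumes "f \<in> mpoly_fun V" "g \<in> mpoly_fun V" "finite S"
    and "\<And>e. e \<notin> S \<Longrightarrow> f (\<lambda>v. a v + e * b v) = g (\<lambda>v. a v + e * b v)"
  shows "f a = g a"
  using mpoly_fun_zero_on_line[OF mpoly_fun_diff[OF assms(1,2)] assms(3), of a b] assms(4) by simp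

lemma mpoly_fun_remainder:
  assumes "f \<in> mpoly_fun V" "w \<in> V" "L \<in> mpoly_fun V"
  shows "\<exists>g\<in>mpoly_fun V. \<forall>a. f a = f (a(w := L a)) + (a w - L a) * g a"
  using assms(1)
proof (induction rule: mpoly_fun.induct)
  case (const c)
  show ?case by (rule bexI[of _ "\<lambda>a. 0"]) (auto intro: mpoly_fun_const)
next
  case (var v)
  show ?case
  proof (cases "v = w")
    case True
    then show ?thesis by (intro bexI[of _ "\<lambda>a. 1"]) (auto intro: mpoly_fun_const)
  next
    case False
    then show ?thesis by (intro bexI[of _ "\<lambda>a. 0"]) (auto intro: mpoly_fun_const)
  qed
next
  case (add f g)
  then obtain f' g' where fg': "f' \<in> mpoly_fun V" "g' \<in> mpoly_fun V"
    and f: "\<And>a. f a = f (a(w := L a)) + (a w - L a) * f' a"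
    and g: "\<And>a. g a = g (a(w := L a)) + (a w - L a) * g' a"
    by blast
  have "f a + g a = (f (a(w := L a)) + g (a(w := L a))) + (a w - L a) * (f' a + g' a)" for a
    by (subst f, subst g) (simp add: distrib_left)
  then show ?case using mpoly_fun_add[OF fg'] by (intro bexI[of _ "\<lambda>a. f' a + g' a"]) blast+
next
  case (mult f g)
  then obtain f' g' where fg': "f' \<in> mpoly_fun V" "g' \<in> mpoly_fun V"
    and f: "\<And>a. f a = f (a(w := L a)) + (a w - L a) * f' a"
    and g: "\<And>a. g a = g (a(w := L a)) + (a w - L a) * g' a"
    by blast
  let ?g = "\<lambda>a. f' a * g (a(w := L a)) + f (a(w := L a)) * g' a + (a w - L a) * f' a * g' a"
  have upd: "(\<lambda>a. (a(w := L a)) v) \<in> mpoly_fun V" if "v \<in> V" for v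
    using that assms(3) by (cases "v = w") (simp_all add: mpoly_fun.var)
  have "(\<lambda>a. f (a(w := L a))) \<in> mpoly_fun V" by (rule mpoly_fun_subst[OF mult.hyps(1) upd])
  moreover have "(\<lambda>a. g (a(w := L a))) \<in> mpoly_fun V" by (rule mpoly_fun_subst[OF mult.hyps(2) upd])
  moreover have "(\<lambda>a. a w - L a) \<in> mpoly_fun V"
    using assms(2,3) by (intro mpoly_fun_diff mpoly_fun.var)
  ultimately have "?g \<in> mpoly_fun V" using fg' by (intro mpoly_fun_add mpoly_fun_mult)
  moreover have "f a * g a = f (a(w := L a)) * g (a(w := L a)) + (a w - L a) * ?g a" for a
    by (subst f, subst g) (simp add: algebra_simps)
  ultimately show ?case by (intro bexI[of _ ?g]) blast+
qed

lemma mpoly_fun_divide: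
  assumes "f \<in> mpoly_fun V" "w \<in> V" "L \<in> mpoly_fun V"
    and "\<And>a. a w = L a \<Longrightarrow> f a = 0" and "\<And>a c. L (a(w := c)) = L a"
  shows "\<exists>g\<in>mpoly_fun V. f = (\<lambda>a. (a w - L a) * g a)"
proof -
  obtain g where g: "g \<in> mpoly_fun V" "\<forall>a. f a = f (a(w := L a)) + (a w - L a) * g a"
    using mpoly_fun_remainder[OF assms(1-3)] by blast
  have "f (a(w := L a)) = 0" for a
    using assms(4)[of "a(w := L a)"] assms(5)[of a "L a"] by simp
  with g show ?thesis by auto
qed

definition monom_fun :: "var set \<Rightarrow> (var \<Rightarrow> nat) \<Rightarrow> pfun" where
  "monom_fun W \<beta> a = (\<Prod>w\<in>W. a w ^ \<beta> w)"

lemma mpoly_fun_monom_fun: "finite W \<Longrightarrow> monom_fun W \<beta> \<in> mpoly_fun W"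
  unfolding monom_fun_def[abs_def] by (intro mpoly_fun_prod mpoly_fun_power mpoly_fun.var)

lemma mpoly_fun_expansion:
  assumes "f \<in> mpoly_fun V" "V \<subseteq> U \<union> W" "finite W"
  shows "\<exists>L. (\<forall>x\<in>set L. fst x \<in> mpoly_fun U) \<and> (\<forall>a. f a = (\<Sum>x\<leftarrow>L. fst x a * monom_fun W (snd x) a))"
  using assms(1,2)
proof (induction rule: mpoly_fun.induct)
  case (const c)
  show ?case by (intro exI[of _ "[(\<lambda>a. c, \<lambda>w. 0)]"]) (simp add: monom_fun_def mpoly_fun_const)
next
  case (var v)
  show ?case
  proof (cases "v \<in> W")
    case True
    have "monom_fun W (\<lambda>w. if w = v then 1 else 0) a = a v" for a
      unfolding monom_fun_def using assms(3) True by (simp add: if_distrib prod.delta cong: if_cong)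
    then show ?thesis
      by (intro exI[of _ "[(\<lambda>a. 1, \<lambda>w. if w = v then 1 else 0)]"]) (simp add: mpoly_fun_const)
  next
    case False
    with var show ?thesis
      by (intro exI[of _ "[(\<lambda>a. a v, \<lambda>w. 0)]"]) (auto simp: monom_fun_def intro: mpoly_fun.var)
  qed
next
  case (add f g)
  then obtain L1 L2 where "\<forall>x\<in>set L1. fst x \<in> mpoly_fun U" "\<forall>a. f a = (\<Sum>x\<leftarrow>L1. fst x a * monom_fun W (snd x) a)"
    "\<forall>x\<in>set L2. fst x \<in> mpoly_fun U" "\<forall>a. g a = (\<Sum>x\<leftarrow>L2. fst x a * monom_fun W (snd x) a)"
    by blast
  then show ?case by (intro exI[of _ "L1 @ L2"]) auto
next
  case (mult f g)
  then obtain L1 L2 where L: "\<forall>x\<in>set L1. fst x \<in> mpoly_fun U" "\<forall>x\<in>set L2. fst x \<in> mpoly_fun U"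
    and f: "\<forall>a. f a = (\<Sum>x\<leftarrow>L1. fst x a * monom_fun W (snd x) a)"
    and g: "\<forall>a. g a = (\<Sum>x\<leftarrow>L2. fst x a * monom_fun W (snd x) a)"
    by blast
  let ?L = "[(\<lambda>a. fst x a * fst y a, \<lambda>w. snd x w + snd y w). x \<leftarrow> L1, y \<leftarrow> L2]"
  have "\<forall>z\<in>set ?L. fst z \<in> mpoly_fun U" using L by (auto intro: mpoly_fun_mult)
  moreover have "f a * g a = (\<Sum>z\<leftarrow>?L. fst z a * monom_fun W (snd z) a)" for a
  proof -
    have "f a * g a = (\<Sum>x\<leftarrow>L1. \<Sum>y\<leftarrow>L2. fst x a * monom_fun W (snd x) a * (fst y a * monom_fun W (snd y) a))"
      unfolding f[rule_format] g[rule_format] sum_list_mult_const[symmetric] sum_list_const_mult ..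
    also have "\<dots> = (\<Sum>z\<leftarrow>?L. fst z a * monom_fun W (snd z) a)"
      by (induction L1) (simp_all add: monom_fun_def power_add prod.distrib o_def mult_ac)
    finally show ?thesis .
  qed
  ultimately show ?case by blast
qed

lemma mpoly_fun_monom_expansion:
  assumes "f \<in> mpoly_fun V" "V \<subseteq> W" "finite W"
  shows "\<exists>L. \<forall>a. f a = (\<Sum>x\<leftarrow>L. fst x * monom_fun W (snd x) a)"
proof -
  obtain L where L: "\<forall>x\<in>set L. fst x \<in> mpoly_fun {}"
    "\<forall>a. f a = (\<Sum>x\<leftarrow>L. fst x a * monom_fun W (snd x) a)"
    using mpoly_fun_expansion[OF assms(1) _ assms(3), of "{}"] assms(2) by auto
  have const: "fst x a = fst x undefined" if "x \<in> set L" for x a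
    using mpoly_fun_empty[of "fst x"] L(1) that by force
  have "f a = (\<Sum>x\<leftarrow>map (\<lambda>x. (fst x undefined, snd x)) L. fst x * monom_fun W (snd x) a)" for a
  proof -
    have "f a = (\<Sum>x\<leftarrow>L. fst x a * monom_fun W (snd x) a)" using L(2) by blast
    also have "\<dots> = (\<Sum>x\<leftarrow>L. fst x undefined * monom_fun W (snd x) a)"
      by (intro arg_cong[where f=sum_list] map_cong refl) (metis const)
    finally show ?thesis by (simp add: o_def)
  qed
  then show ?thesis by blast
qed

section \<open>Supersymmetric polynomials\<close>

lemma permutes_lessThan_less: "\<sigma> permutes {..<n} \<Longrightarrow> i < n \<Longrightarrow> \<sigma> i < n"
  using permutes_in_image[of \<sigma> "{..<n}" i] by simp

lemma permX_apply [simp]: "permX \<sigma> a (X k) = a (X (\<sigma> k))" "permX \<sigma> a (Y k) = a (Y k)"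
  and permY_apply [simp]: "permY \<sigma> a (X k) = a (X k)" "permY \<sigma> a (Y k) = a (Y (\<sigma> k))"
  by (simp_all add: permX_def permY_def)

lemma permX_permX: "permX \<tau> (permX \<rho> a) = permX (\<rho> \<circ> \<tau>) a"
  and permY_permY: "permY \<tau> (permY \<rho> a) = permY (\<rho> \<circ> \<tau>) a"
  by (rule ext, case_tac x, simp_all)+

definition perm_invariant :: "((nat \<Rightarrow> nat) \<Rightarrow> point \<Rightarrow> point) \<Rightarrow> nat \<Rightarrow> pfun \<Rightarrow> bool" where
  "perm_invariant act n f \<longleftrightarrow> (\<forall>\<sigma> a. \<sigma> permutes {..<n} \<longrightarrow> f (act \<sigma> a) = f a)"

definition cancellation :: "nat \<Rightarrow> nat \<Rightarrow> pfun \<Rightarrow> bool" where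
  "cancellation n m f \<longleftrightarrow>
     (0 < n \<longrightarrow> 0 < m \<longrightarrow> (\<forall>a s t. f (a(X 0 := s, Y 0 := s)) = f (a(X 0 := t, Y 0 := t))))"

definition supersym :: "nat \<Rightarrow> nat \<Rightarrow> pfun set" where
  "supersym n m = {f \<in> mpoly_fun (avars n m).
     perm_invariant permX n f \<and> perm_invariant permY m f \<and> cancellation n m f}"

lemma subalgebra_supersym: "subalgebra (supersym n m)"
  unfolding subalgebra_def supersym_def perm_invariant_def cancellation_def
  by (auto intro: mpoly_fun_const mpoly_fun_add mpoly_fun_mult) metis+

definition super_series :: "nat \<Rightarrow> nat \<Rightarrow> point \<Rightarrow> complex fps" where
  "super_series n m a = (\<Prod>i<n. 1 - fps_const (a (X i)) * fps_X)
     * inverse (\<Prod>j<m. 1 - fps_const (a (Y j)) * fps_X)"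

definition super_coeff :: "nat \<Rightarrow> nat \<Rightarrow> nat \<Rightarrow> pfun" where
  "super_coeff n m r a = fps_nth (super_series n m a) r"

definition super_alg :: "nat \<Rightarrow> nat \<Rightarrow> pfun set" where
  "super_alg n m = alg_gen (range (super_coeff n m))"

lemmas subalgebra_super_alg = subalgebra_alg_gen[of "range (super_coeff n m)", folded super_alg_def] for n m

lemma super_coeff_in_super_alg: "super_coeff n m r \<in> super_alg n m"
  unfolding super_alg_def by (rule alg_gen.gen) simp

lemma super_alg_minimal: "subalgebra T \<Longrightarrow> (\<And>r. super_coeff n m r \<in> T) \<Longrightarrow> super_alg n m \<subseteq> T"
  unfolding super_alg_def by (rule alg_gen_minimal) auto

lemma coeffs_in_super_series:
  assumes "subalgebra S" "\<And>i. i < n \<Longrightarrow> (\<lambda>a. a (X i)) \<in> S" "\<And>j. j < m \<Longrightarrow> (\<lambda>a. a (Y j)) \<in> S"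
  shows "coeffs_in S (super_series n m)"
  unfolding super_series_def
  by (intro coeffs_in_mult coeffs_in_prod coeffs_in_inverse coeffs_in_linear assms)
     (simp_all add: fps_nth_prod_linear_0)

lemma super_coeff_mpoly_fun: "super_coeff n m r \<in> mpoly_fun (avars n m)"
  using coeffs_in_super_series[OF subalgebra_mpoly_fun, of n "avars n m" m]
  unfolding coeffs_in_def super_coeff_def[abs_def] by (auto simp: avars_def intro: mpoly_fun.var)

lemma super_series_permX: "\<sigma> permutes {..<n} \<Longrightarrow> super_series n m (permX \<sigma> a) = super_series n m a"
  and super_series_permY: "\<tau> permutes {..<m} \<Longrightarrow> super_series n m (permY \<tau> a) = super_series n m a"
  unfolding super_series_def
  using prod.permute[of \<sigma> "{..<n}" "\<lambda>i. 1 - fps_const (a (X i)) * fps_X"]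
    prod.permute[of \<tau> "{..<m}" "\<lambda>j. 1 - fps_const (a (Y j)) * fps_X"]
  by (simp_all add: o_def)

lemma super_series_cancel:
  assumes "0 < n" "0 < m"
  shows "super_series n m (a(X 0 := s, Y 0 := s)) = (\<Prod>i\<in>{1..<n}. 1 - fps_const (a (X i)) * fps_X)
     * inverse (\<Prod>j\<in>{1..<m}. 1 - fps_const (a (Y j)) * fps_X)"
proof -
  have n: "{..<n} = insert 0 {1..<n}" and m: "{..<m} = insert 0 {1..<m}" using assms by auto
  let ?A = "\<Prod>i\<in>{1..<n}. 1 - fps_const (a (X i)) * fps_X"
  let ?B = "\<Prod>j\<in>{1..<m}. 1 - fps_const (a (Y j)) * fps_X"
  let ?l = "1 - fps_const s * fps_X :: complex fps"
  have A: "(\<Prod>i<n. 1 - fps_const ((a(X 0 := s, Y 0 := s)) (X i)) * fps_X) = ?l * ?A"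
    unfolding n by (subst prod.insert) (auto intro!: prod.cong)
  have B: "(\<Prod>j<m. 1 - fps_const ((a(X 0 := s, Y 0 := s)) (Y j)) * fps_X) = ?l * ?B"
    unfolding m by (subst prod.insert) (auto intro!: prod.cong)
  have "?l * inverse ?l = 1" by (rule inverse_mult_eq_1') simp
  moreover have "?l * ?A * (inverse ?l * inverse ?B) = (?l * inverse ?l) * (?A * inverse ?B)"
    by (simp only: mult_ac)
  ultimately show ?thesis unfolding super_series_def A B fps_inverse_mult by simp
qed

lemma super_alg_subset_supersym: "super_alg n m \<subseteq> supersym n m"
proof (rule super_alg_minimal[OF subalgebra_supersym])
  fix r show "super_coeff n m r \<in> supersym n m"
    unfolding supersym_def perm_invariant_def cancellation_def
    by (simp add: super_coeff_mpoly_fun super_coeff_def super_series_permX super_series_permY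
        super_series_cancel)
qed

lemma super_alg_mpoly_fun: "f \<in> super_alg n m \<Longrightarrow> f \<in> mpoly_fun (avars n m)"
  using super_alg_subset_supersym by (auto simp: supersym_def)

lemma super_alg_lift:
  assumes "g \<in> super_alg n m"
  shows "\<exists>G\<in>super_alg (Suc n) m. \<forall>a. G (a(X n := 0)) = g a"
proof -
  have "super_series (Suc n) m (a(X n := 0)) = super_series n m a" for a
    unfolding super_series_def lessThan_Suc by (subst prod.insert) (auto intro!: prod.cong)
  then have "super_coeff n m r \<in> (\<lambda>G a. G (a(X n := 0))) ` super_alg (Suc n) m" for r
    using super_coeff_in_super_alg[of "Suc n" m r]
    by (intro image_eqI[of _ _ "super_coeff (Suc n) m r"]) (simp_all add: super_coeff_def fun_eq_iff)
  then have "super_alg n m \<subseteq> (\<lambda>G a. G (a(X n := 0))) ` super_alg (Suc n) m"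
    by (intro super_alg_minimal subalgebra_image_comp subalgebra_super_alg)
  then show ?thesis using assms by (auto simp: fun_eq_iff)
qed

section \<open>The bialternant formula\<close>

definition alternant :: "nat \<Rightarrow> (nat \<Rightarrow> nat) \<Rightarrow> pfun" where
  "alternant m \<beta> a = (\<Sum>p\<in>{p. p permutes {..<m}}. of_int (sign p) * (\<Prod>i<m. a (Y (p i)) ^ \<beta> i))"

lemma alternant_mpoly_fun: "alternant m \<beta> \<in> mpoly_fun (Y ` {..<m})"
  unfolding alternant_def[abs_def]
  by (intro mpoly_fun_sum mpoly_fun_cmult mpoly_fun_prod mpoly_fun_power mpoly_fun.var)
     (auto dest: permutes_lessThan_less)

lemma alternant_permY:
  assumes "\<sigma> permutes {..<m}"
  shows "alternant m \<beta> (permY \<sigma> a) = of_int (sign \<sigma>) * alternant m \<beta> a"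
proof -
  let ?P = "{p. p permutes {..<m}}"
  let ?f = "\<lambda>p. of_int (sign p) * (\<Prod>i<m. a (Y (\<sigma> (p i))) ^ \<beta> i) :: complex"
  have inv: "Hilbert_Choice.inv \<sigma> permutes {..<m}" using assms by (rule permutes_inv)
  have "alternant m \<beta> (permY \<sigma> a) = sum ?f ?P" unfolding alternant_def by simp
  also have "\<dots> = sum (\<lambda>p. ?f (Hilbert_Choice.inv \<sigma> \<circ> p)) ?P"
    by (rule setum_permutations_compose_left[OF inv])
  also have "\<dots> = (\<Sum>p\<in>?P. of_int (sign \<sigma>) * (of_int (sign p) * (\<Prod>i<m. a (Y (p i)) ^ \<beta> i)))"
  proof (rule sum.cong)
    fix p assume "p \<in> ?P"
    then have "sign (Hilbert_Choice.inv \<sigma> \<circ> p) = sign (Hilbert_Choice.inv \<sigma>) * sign p"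
      by (intro sign_compose) (use inv in \<open>auto simp: permutation_permutes\<close>)
    then have "sign (Hilbert_Choice.inv \<sigma> \<circ> p) = sign \<sigma> * sign p"
      using sign_inverse[of \<sigma>] assms by (metis finite_lessThan permutation_permutes)
    moreover have "\<sigma> (Hilbert_Choice.inv \<sigma> (p i)) = p i" for i using permutes_inverses(1)[OF assms] by simp
    ultimately show "?f (Hilbert_Choice.inv \<sigma> \<circ> p) = of_int (sign \<sigma>) * (of_int (sign p) * (\<Prod>i<m. a (Y (p i)) ^ \<beta> i))"
      by simp
  qed simp
  also have "\<dots> = of_int (sign \<sigma>) * alternant m \<beta> a"
    unfolding alternant_def by (simp add: sum_distrib_left)
  finally show ?thesis .
qed

lemma sum_sum_list_swap: "(\<Sum>s\<in>S. \<Sum>x\<leftarrow>xs. g s x) = (\<Sum>x\<leftarrow>xs. \<Sum>s\<in>S. g s x)"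
  by (induction xs) (simp_all add: sum.distrib)

text \<open>Antisymmetrizing the monomial expansion of \<open>P\<close> writes \<open>P\<close> as a combination of alternants.\<close>
lemma antisymmetric_eq_alternants:
  assumes "P \<in> mpoly_fun (Y ` {..<m})"
    and "\<And>\<sigma> a. \<sigma> permutes {..<m} \<Longrightarrow> P (permY \<sigma> a) = of_int (sign \<sigma>) * P a"
  shows "\<exists>L. \<forall>a. fact m * P a = (\<Sum>x\<leftarrow>L. fst x * alternant m (snd x) a)"
proof -
  let ?W = "Y ` {..<m}" and ?P = "{p. p permutes {..<m}}"
  obtain L where L: "\<And>a. P a = (\<Sum>x\<leftarrow>L. fst x * monom_fun ?W (snd x) a)"
    using mpoly_fun_monom_expansion[OF assms(1)] by auto
  have monom: "monom_fun ?W \<beta> (permY \<sigma> a) = (\<Prod>j<m. a (Y (\<sigma> j)) ^ \<beta> (Y j))" for \<beta> \<sigma> a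
    unfolding monom_fun_def by (subst prod.reindex) (auto simp: inj_on_def)
  have "fact m * P a = (\<Sum>x\<leftarrow>map (\<lambda>x. (fst x, \<lambda>i. snd x (Y i))) L. fst x * alternant m (snd x) a)"
    for a
  proof -
    have "fact m * P a = (\<Sum>\<sigma>\<in>?P. of_int (sign \<sigma>) * P (permY \<sigma> a))"
    proof -
      have "of_int (sign \<sigma>) * P (permY \<sigma> a) = P a" if "\<sigma> \<in> ?P" for \<sigma>
        using assms(2)[of \<sigma> a] that by (simp add: sign_def)
      then show ?thesis by (simp add: card_permutations)
    qed
    also have "\<dots> = (\<Sum>x\<leftarrow>L. \<Sum>\<sigma>\<in>?P. of_int (sign \<sigma>) * (fst x * monom_fun ?W (snd x) (permY \<sigma> a)))"
      unfolding L sum_list_const_mult[symmetric] by (rule sum_sum_list_swap)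
    also have "\<dots> = (\<Sum>x\<leftarrow>L. fst x * alternant m (\<lambda>i. snd x (Y i)) a)"
      unfolding alternant_def monom
      by (intro arg_cong[where f=sum_list] map_cong refl) (simp add: sum_distrib_left mult_ac)
    finally show ?thesis by (simp add: o_def)
  qed
  then show ?thesis by blast
qed

lemma inverse_one_minus_const_X:
  "inverse (1 - fps_const c * fps_X :: complex fps) = Abs_fps (\<lambda>k. c ^ k)"
proof (rule fps_inverse_unique)
  let ?A = "Abs_fps (\<lambda>k. c ^ k) :: complex fps"
  have "(1 - fps_const c * fps_X) * ?A = ?A - fps_const c * (fps_X * ?A)"
    by (simp add: algebra_simps)
  also have "\<dots> = 1" by (rule fps_ext) (case_tac n, simp_all)
  finally show "(1 - fps_const c * fps_X) * ?A = 1" .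
qed

lemma fps_nth_prod_linear_div_linear:
  fixes c :: complex
  assumes "n \<le> N"
  shows "fps_nth ((\<Prod>i<n. 1 - fps_const (u i) * fps_X) * inverse (1 - fps_const c * fps_X)) N
     = c ^ (N - n) * (\<Prod>i<n. c - u i)"
  using assms
proof (induction n arbitrary: N)
  case 0
  then show ?case by (simp add: inverse_one_minus_const_X)
next
  case (Suc n)
  let ?G = "(\<Prod>i<n. 1 - fps_const (u i) * fps_X) * inverse (1 - fps_const c * fps_X)"
  obtain N' where N: "N = Suc N'" and "n \<le> N'" using Suc.prems by (cases N) auto
  have "(\<Prod>i<Suc n. 1 - fps_const (u i) * fps_X) * inverse (1 - fps_const c * fps_X)
      = ?G - fps_const (u n) * (fps_X * ?G)"
    by (simp add: algebra_simps)
  then have "fps_nth ((\<Prod>i<Suc n. 1 - fps_const (u i) * fps_X) * inverse (1 - fps_const c * fps_X)) N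
      = fps_nth ?G N - u n * fps_nth ?G N'"
    by (simp add: N)
  also have "\<dots> = c * c ^ (N' - n) * (\<Prod>i<n. c - u i) - u n * (c ^ (N' - n) * (\<Prod>i<n. c - u i))"
    using Suc.IH[of N] Suc.IH[of N'] Suc.prems \<open>n \<le> N'\<close> N by (simp add: Suc_diff_le)
  finally show ?case using N by (simp add: algebra_simps)
qed

definition lagrange_coeff :: "(nat \<Rightarrow> complex) \<Rightarrow> nat \<Rightarrow> nat \<Rightarrow> complex" where
  "lagrange_coeff v m j = 1 / (\<Prod>l\<in>{..<m}-{j}. v j - v l)"

lemma lagrange_reversed_at_node:
  assumes "inj_on v {..<m}" "0 \<notin> v ` {..<m}" "k < m"
  shows "(\<Sum>j<m. lagrange_coeff v m j * (\<Prod>l\<in>{..<m}-{j}. 1 - v l / v k)) = (1 / v k) ^ (m - 1)"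
proof -
  have vk: "v k \<noteq> 0" using assms(2,3) by force
  have "(\<Sum>j\<in>{..<m}-{k}. lagrange_coeff v m j * (\<Prod>l\<in>{..<m}-{j}. 1 - v l / v k)) = 0"
    using assms(3) vk by (intro sum.neutral ballI) (auto intro!: prod_zero bexI[of _ k])
  moreover have "lagrange_coeff v m k * (\<Prod>l\<in>{..<m}-{k}. 1 - v l / v k)
      = (\<Prod>l\<in>{..<m}-{k}. (1 - v l / v k) / (v k - v l))"
    unfolding lagrange_coeff_def by (simp add: prod_dividef)
  moreover have "(1 - v l / v k) / (v k - v l) = 1 / v k" if "l \<in> {..<m}-{k}" for l
  proof -
    have "v k \<noteq> v l" using that assms(1,3) by (auto dest: inj_onD)
    then show ?thesis using vk by (simp add: field_simps)
  qed
  ultimately show ?thesis using assms(3) by (simp add: sum.remove[of _ k])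
qed

text \<open>Lagrange interpolation of \<open>z\<^sup>m\<^sup>-\<^sup>1\<close> at the nodes \<open>1 / v j\<close>, after reversing the polynomials.\<close>
lemma monom_eq_sum_lagrange:
  assumes "1 \<le> m" "inj_on v {..<m}" "0 \<notin> v ` {..<m}"
  shows "(\<Sum>j<m. smult (lagrange_coeff v m j) (\<Prod>l\<in>{..<m}-{j}. [:1, - v l:])) = monom 1 (m - 1)"
proof (rule ccontr)
  define p where "p = (\<Sum>j<m. smult (lagrange_coeff v m j) (\<Prod>l\<in>{..<m}-{j}. [:1, - v l:])) - monom 1 (m - 1)"
  assume "(\<Sum>j<m. smult (lagrange_coeff v m j) (\<Prod>l\<in>{..<m}-{j}. [:1, - v l:])) \<noteq> monom 1 (m - 1)"
  then have "p \<noteq> 0" unfolding p_def by simp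
  have "degree (\<Prod>l\<in>{..<m}-{j}. [:1, - v l:]) \<le> m - 1" if "j < m" for j
  proof -
    have "degree (\<Prod>l\<in>{..<m}-{j}. [:1, - v l:]) \<le> (\<Sum>l\<in>{..<m}-{j}. degree [:1, - v l:])"
      using degree_prod_sum_le[of "{..<m}-{j}" "\<lambda>l. [:1, - v l:]"] by (simp add: o_def)
    also have "\<dots> \<le> card ({..<m}-{j})"
      using sum_mono[of "{..<m}-{j}" "\<lambda>l. degree [:1, - v l:]" "\<lambda>_. 1"] by simp
    finally show ?thesis using that by simp
  qed
  then have deg: "degree p \<le> m - 1" unfolding p_def
    by (intro degree_diff_le degree_sum_le order.trans[OF degree_smult_le] degree_monom_le) auto
  have roots: "(\<lambda>k. 1 / v k) ` {..<m} \<subseteq> {x. poly p x = 0}"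
    using lagrange_reversed_at_node[OF assms(2,3)] by (auto simp: p_def poly_sum poly_prod poly_monom)
  have "inj_on (\<lambda>k. 1 / v k) {..<m}" using assms(2) by (auto simp: inj_on_def)
  then have "m = card ((\<lambda>k. 1 / v k) ` {..<m})" by (simp add: card_image)
  also have "\<dots> \<le> card {x. poly p x = 0}" by (rule card_mono[OF poly_roots_finite[OF \<open>p \<noteq> 0\<close>] roots])
  also have "\<dots> \<le> degree p" by (rule card_poly_roots_bound[OF \<open>p \<noteq> 0\<close>])
  finally show False using deg assms(1) by simp
qed

lemma fps_X_power_eq_sum_lagrange:
  assumes "1 \<le> m" "inj_on v {..<m}" "0 \<notin> v ` {..<m}"
  shows "fps_X ^ (m - 1) = (\<Sum>j<m. fps_const (lagrange_coeff v m j)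
     * (\<Prod>l\<in>{..<m}-{j}. 1 - fps_const (v l) * fps_X :: complex fps))"
proof -
  have linear: "fps_of_poly ([:1, - c:] :: complex poly) = 1 - fps_const c * fps_X" for c
    by (simp add: fps_of_poly_pCons fps_of_poly_const)
  show ?thesis
    using arg_cong[OF monom_eq_sum_lagrange[OF assms], of fps_of_poly]
    by (simp add: fps_of_poly_sum fps_of_poly_smult fps_of_poly_prod fps_of_poly_monom' linear)
qed

definition delta_row :: "nat \<Rightarrow> point \<Rightarrow> nat \<Rightarrow> complex" where
  "delta_row n a j = (\<Prod>i<n. a (Y j) - a (X i))"

definition delta :: "nat \<Rightarrow> nat \<Rightarrow> pfun" where
  "delta n m a = (\<Prod>j<m. delta_row n a j)"

definition shifted_coeff :: "nat \<Rightarrow> nat \<Rightarrow> nat \<Rightarrow> pfun" where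
  "shifted_coeff n m N a = fps_nth (fps_X ^ (m - 1) * super_series n m a) N"

lemma shifted_coeff_in_super_alg: "shifted_coeff n m N \<in> super_alg n m"
proof (cases "N < m - 1")
  case True
  then have "shifted_coeff n m N = (\<lambda>a. 0)"
    unfolding shifted_coeff_def by (simp add: fps_X_power_mult_nth)
  then show ?thesis by (simp add: subalgebra_const[OF subalgebra_super_alg])
next
  case False
  then have "shifted_coeff n m N = super_coeff n m (N - (m - 1))"
    unfolding shifted_coeff_def super_coeff_def by (simp add: fps_X_power_mult_nth)
  then show ?thesis by (simp add: super_coeff_in_super_alg)
qed

definition generic_y :: "nat \<Rightarrow> point \<Rightarrow> bool" where
  "generic_y m a \<longleftrightarrow> inj_on (\<lambda>j. a (Y j)) {..<m} \<and> 0 \<notin> (\<lambda>j. a (Y j)) ` {..<m}"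

text \<open>Partial fractions in \<open>t\<close>: for distinct nonzero \<open>y\<^sub>j\<close>, the series \<open>t\<^sup>m\<^sup>-\<^sup>1 / \<Prod>(1 - y\<^sub>j t)\<close>
  splits into the simple fractions \<open>1 / (1 - y\<^sub>j t)\<close>.\<close>
lemma shifted_coeff_eq_sum:
  assumes "1 \<le> m" "generic_y m a" "n \<le> N"
  shows "shifted_coeff n m N a
    = (\<Sum>j<m. lagrange_coeff (\<lambda>j. a (Y j)) m j * delta_row n a j * a (Y j) ^ (N - n))"
proof -
  have generic: "inj_on (\<lambda>j. a (Y j)) {..<m}" "0 \<notin> (\<lambda>j. a (Y j)) ` {..<m}"
    using assms(2) by (simp_all add: generic_y_def)
  let ?v = "\<lambda>j. a (Y j)"
  let ?l = "\<lambda>c. 1 - fps_const c * fps_X :: complex fps"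
  let ?PX = "\<Prod>i<n. ?l (a (X i))" and ?PY = "\<Prod>l<m. ?l (a (Y l))"
  let ?R = "\<lambda>j. \<Prod>l\<in>{..<m}-{j}. ?l (a (Y l))"
  have R: "?R j * inverse ?PY = inverse (?l (a (Y j)))" if "j < m" for j
  proof -
    have "?R j * inverse (?R j) = 1" by (rule inverse_mult_eq_1') (simp add: fps_nth_prod_linear_0)
    moreover have "?PY = ?l (a (Y j)) * ?R j" using that by (subst prod.remove[of _ j]) auto
    ultimately show ?thesis by (simp add: fps_inverse_mult mult_ac)
  qed
  have "fps_X ^ (m - 1) * super_series n m a = ?PX * (fps_X ^ (m - 1) * inverse ?PY)"
    unfolding super_series_def by (simp add: algebra_simps)
  also have "fps_X ^ (m - 1) * inverse ?PY = (\<Sum>j<m. fps_const (lagrange_coeff ?v m j) * (?R j * inverse ?PY))"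
    by (subst fps_X_power_eq_sum_lagrange[OF assms(1) generic]) (simp only: sum_distrib_right mult.assoc)
  also have "\<dots> = (\<Sum>j<m. fps_const (lagrange_coeff ?v m j) * inverse (?l (a (Y j))))"
    by (intro sum.cong refl) (simp add: R)
  finally have "shifted_coeff n m N a
      = (\<Sum>j<m. lagrange_coeff ?v m j * fps_nth (?PX * inverse (?l (a (Y j)))) N)"
    unfolding shifted_coeff_def by (simp add: sum_distrib_left fps_sum_nth mult.left_commute)
  also have "\<dots> = (\<Sum>j<m. lagrange_coeff ?v m j * delta_row n a j * a (Y j) ^ (N - n))"
    by (intro sum.cong refl) (simp add: fps_nth_prod_linear_div_linear[OF assms(3)] delta_row_def)
  finally show ?thesis .
qed

definition power_mat :: "nat \<Rightarrow> (nat \<Rightarrow> nat) \<Rightarrow> point \<Rightarrow> complex mat" where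
  "power_mat m \<beta> a = mat m m (\<lambda>(i, j). a (Y j) ^ \<beta> i)"

definition weight_mat :: "nat \<Rightarrow> nat \<Rightarrow> point \<Rightarrow> complex mat" where
  "weight_mat n m a =
     mat m m (\<lambda>(i, j). if i = j then lagrange_coeff (\<lambda>j. a (Y j)) m j * delta_row n a j else 0)"

definition shifted_mat :: "nat \<Rightarrow> nat \<Rightarrow> (nat \<Rightarrow> nat) \<Rightarrow> point \<Rightarrow> complex mat" where
  "shifted_mat n m \<beta> a = mat m m (\<lambda>(i, k). shifted_coeff n m (n + \<beta> i + k) a)"

definition flip_mat :: "nat \<Rightarrow> complex mat" where
  "flip_mat m = mat m m (\<lambda>(i, j). if i + j = m - 1 then 1 else 0)"

lemma det_power_mat: "det (power_mat m \<beta> a) = alternant m \<beta> a"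
proof -
  have "det (power_mat m \<beta> a)
      = (\<Sum>p\<in>{p. p permutes {0..<m}}. signof p * (\<Prod>i=0..<m. power_mat m \<beta> a $$ (i, p i)))"
    unfolding power_mat_def by (rule det_def') simp
  also have "\<dots> = alternant m \<beta> a"
    unfolding alternant_def atLeast0LessThan
    by (intro sum.cong refl arg_cong2[where f="(*)"] prod.cong)
       (auto simp: power_mat_def dest: permutes_lessThan_less)
  finally show ?thesis .
qed

lemma det_weight_mat:
  "det (weight_mat n m a) = (\<Prod>j<m. lagrange_coeff (\<lambda>j. a (Y j)) m j * delta_row n a j)"
proof -
  have "det (weight_mat n m a) = prod_list (diag_mat (weight_mat n m a))"
    by (rule det_upper_triangular[of _ m]) (auto simp: upper_triangular_def weight_mat_def)
  then show ?thesis unfolding prod_list_diag_prod by (simp add: weight_mat_def atLeast0LessThan)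
qed

text \<open>Entrywise, this is the partial fraction expansion \<open>shifted_coeff_eq_sum\<close>.\<close>
lemma shifted_mat_factor:
  assumes "1 \<le> m" "generic_y m a"
  shows "shifted_mat n m \<beta> a = power_mat m \<beta> a * weight_mat n m a * transpose_mat (power_mat m id a)"
proof (rule eq_matI)
  fix i k assume "i < dim_row (power_mat m \<beta> a * weight_mat n m a * transpose_mat (power_mat m id a))"
    and "k < dim_col (power_mat m \<beta> a * weight_mat n m a * transpose_mat (power_mat m id a))"
  then have i: "i < m" and k: "k < m" by (auto simp: power_mat_def)
  let ?w = "\<lambda>j. lagrange_coeff (\<lambda>j. a (Y j)) m j * delta_row n a j"
  have AW: "(power_mat m \<beta> a * weight_mat n m a) $$ (i, j) = a (Y j) ^ \<beta> i * ?w j" if j: "j < m" for j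
  proof -
    have "(power_mat m \<beta> a * weight_mat n m a) $$ (i, j)
        = (\<Sum>l\<in>{0..<m}. a (Y l) ^ \<beta> i * (if l = j then ?w l else 0))"
      using i j by (auto simp: power_mat_def weight_mat_def scalar_prod_def intro!: sum.cong)
    also have "\<dots> = a (Y j) ^ \<beta> i * ?w j"
      using j by (simp add: if_distrib[of "\<lambda>x. _ * x"] sum.delta cong: if_cong)
    finally show ?thesis .
  qed
  have "(power_mat m \<beta> a * weight_mat n m a * transpose_mat (power_mat m id a)) $$ (i, k)
      = (\<Sum>j\<in>{0..<m}. (power_mat m \<beta> a * weight_mat n m a) $$ (i, j) * a (Y j) ^ k)"
    using i k by (simp add: power_mat_def weight_mat_def scalar_prod_def)
  also have "\<dots> = (\<Sum>j<m. ?w j * a (Y j) ^ (n + \<beta> i + k - n))"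
    by (simp add: atLeast0LessThan AW power_add mult_ac)
  also have "\<dots> = shifted_mat n m \<beta> a $$ (i, k)"
    using i k shifted_coeff_eq_sum[OF assms, of n "n + \<beta> i + k"] by (simp add: shifted_mat_def)
  finally show "shifted_mat n m \<beta> a $$ (i, k)
      = (power_mat m \<beta> a * weight_mat n m a * transpose_mat (power_mat m id a)) $$ (i, k)" ..
qed (auto simp: shifted_mat_def power_mat_def)

lemma det_shifted_mat:
  assumes "1 \<le> m" "generic_y m a"
  shows "det (shifted_mat n m \<beta> a)
    = alternant m \<beta> a * (\<Prod>j<m. lagrange_coeff (\<lambda>j. a (Y j)) m j * delta_row n a j) * alternant m id a"
proof -
  have dims: "power_mat m \<beta> a \<in> carrier_mat m m" "weight_mat n m a \<in> carrier_mat m m"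
    "transpose_mat (power_mat m id a) \<in> carrier_mat m m"
    by (auto simp: power_mat_def weight_mat_def)
  have "det (shifted_mat n m \<beta> a)
      = det (power_mat m \<beta> a * weight_mat n m a) * det (transpose_mat (power_mat m id a))"
    unfolding shifted_mat_factor[OF assms] using dims by (intro det_mult[of _ m]) auto
  also have "\<dots> = det (power_mat m \<beta> a) * det (weight_mat n m a) * det (power_mat m id a)"
    using det_mult[OF dims(1,2)] det_transpose[of "power_mat m id a" m] dims by simp
  finally show ?thesis by (simp add: det_power_mat det_weight_mat)
qed

lemma det_flip_mat_square: "det (flip_mat m) * det (flip_mat m) = 1"
proof -
  have "flip_mat m * flip_mat m = 1\<^sub>m m"
  proof (rule eq_matI)
    fix i j assume "i < dim_row (1\<^sub>m m)" "j < dim_col (1\<^sub>m m)"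
    then have i: "i < m" and j: "j < m" by auto
    have "(flip_mat m * flip_mat m) $$ (i, j)
        = (\<Sum>k\<in>{0..<m}. (if i + k = m - 1 then 1 else 0) * (if k + j = m - 1 then 1 else 0))"
      using i j by (simp add: flip_mat_def scalar_prod_def)
    also have "\<dots> = (\<Sum>k\<in>{0..<m}. if k = m - 1 - i then (if k + j = m - 1 then 1 else 0) else 0)"
      using i by (intro sum.cong refl) auto
    also have "\<dots> = 1\<^sub>m m $$ (i, j)"
      using i j by (subst sum.delta) auto
    finally show "(flip_mat m * flip_mat m) $$ (i, j) = 1\<^sub>m m $$ (i, j)" .
  qed (auto simp: flip_mat_def)
  then show ?thesis by (metis det_mult det_one flip_mat_def dim_col_mat(1) dim_row_mat(1) carrier_matI)
qed

text \<open>For \<open>n = 0\<close> the shifted coefficient matrix becomes triangular with unit diagonal after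
  reversing its columns.\<close>
lemma det_shifted_mat_0: "det (shifted_mat 0 m id a) = det (flip_mat m)"
proof -
  let ?M = "shifted_mat 0 m id a"
  have MJ: "(?M * flip_mat m) $$ (i, k) = shifted_coeff 0 m (i + (m - 1 - k)) a" if "i < m" "k < m" for i k
  proof -
    have "(?M * flip_mat m) $$ (i, k)
        = (\<Sum>j\<in>{0..<m}. shifted_coeff 0 m (i + j) a * (if j + k = m - 1 then 1 else 0))"
      using that by (simp add: shifted_mat_def flip_mat_def scalar_prod_def)
    also have "\<dots> = (\<Sum>j\<in>{0..<m}. if j = m - 1 - k then shifted_coeff 0 m (i + j) a else 0)"
      using that by (intro sum.cong refl) auto
    finally show ?thesis using that by (simp add: sum.delta)
  qed
  have "det (?M * flip_mat m) = prod_list (diag_mat (?M * flip_mat m))"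
  proof (rule det_lower_triangular[of m])
    fix i j assume "i < j" "j < m"
    then show "(?M * flip_mat m) $$ (i, j) = 0"
      by (simp add: MJ shifted_coeff_def fps_X_power_mult_nth)
  qed (auto simp: shifted_mat_def flip_mat_def)
  also have "\<dots> = 1"
  proof -
    have "fps_nth (super_series 0 m a) 0 = 1"
      by (simp add: super_series_def fps_nth_prod_linear_0)
    then have "(?M * flip_mat m) $$ (i, i) = 1" if "i < m" for i
      using that by (simp add: MJ shifted_coeff_def fps_X_power_mult_nth)
    then show ?thesis unfolding prod_list_diag_prod by (simp add: shifted_mat_def)
  qed
  finally have "det ?M * det (flip_mat m) = 1"
    by (simp add: det_mult[of _ m] shifted_mat_def flip_mat_def)
  then have "det ?M * (det (flip_mat m) * det (flip_mat m)) = det (flip_mat m)"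
    by (simp add: mult.assoc[symmetric])
  then show ?thesis by (simp add: det_flip_mat_square)
qed

lemma det_shifted_mat_in_super_alg: "(\<lambda>a. det (shifted_mat n m \<beta> a)) \<in> super_alg n m"
proof -
  have "det (shifted_mat n m \<beta> a) = (\<Sum>p\<in>{p. p permutes {0..<m}}.
      signof p * (\<Prod>i\<in>{0..<m}. shifted_coeff n m (n + \<beta> i + p i) a))" for a
  proof -
    have "det (shifted_mat n m \<beta> a)
        = (\<Sum>p\<in>{p. p permutes {0..<m}}. signof p * (\<Prod>i=0..<m. shifted_mat n m \<beta> a $$ (i, p i)))"
      by (rule det_def') (simp add: shifted_mat_def)
    also have "\<dots> = (\<Sum>p\<in>{p. p permutes {0..<m}}.
        signof p * (\<Prod>i\<in>{0..<m}. shifted_coeff n m (n + \<beta> i + p i) a))"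
      by (intro sum.cong refl arg_cong2[where f="(*)"] prod.cong)
         (auto simp: shifted_mat_def atLeast0LessThan dest: permutes_lessThan_less)
    finally show ?thesis .
  qed
  moreover have "(\<lambda>a. \<Sum>p\<in>{p. p permutes {0..<m}}.
      signof p * (\<Prod>i\<in>{0..<m}. shifted_coeff n m (n + \<beta> i + p i) a)) \<in> super_alg n m"
    using subalgebra_super_alg
    by (intro subalgebra_sum subalgebra_cmult subalgebra_prod shifted_coeff_in_super_alg)
  ultimately show ?thesis by simp
qed

lemma delta_mpoly_fun: "delta n m \<in> mpoly_fun (avars n m)"
  unfolding delta_def[abs_def] delta_row_def
  by (intro mpoly_fun_prod mpoly_fun_diff mpoly_fun.var) (auto simp: avars_def)

lemma generic_y_on_line:
  fixes a :: point
  shows "\<exists>S. finite S \<and> (\<forall>e. e \<notin> S \<longrightarrow> inj_on (\<lambda>j. a (Y j) + e * of_nat (Suc j)) {..<m}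
     \<and> 0 \<notin> (\<lambda>j. a (Y j) + e * of_nat (Suc j)) ` {..<m})"
proof -
  let ?S = "(\<lambda>j. - a (Y j) / of_nat (Suc j)) ` {..<m}
    \<union> (\<lambda>(j, l). (a (Y l) - a (Y j)) / (of_nat j - of_nat l)) ` ({..<m} \<times> {..<m})"
  have "inj_on (\<lambda>j. a (Y j) + e * of_nat (Suc j)) {..<m}" if e: "e \<notin> ?S" for e
  proof (rule inj_onI, rule ccontr)
    fix j l assume jl: "j \<in> {..<m}" "l \<in> {..<m}" "j \<noteq> l"
      and eq: "a (Y j) + e * of_nat (Suc j) = a (Y l) + e * of_nat (Suc l)"
    have "(of_nat j - of_nat l :: complex) \<noteq> 0" using jl by simp
    moreover from eq have "e * (of_nat j - of_nat l) = a (Y l) - a (Y j)" by (simp add: algebra_simps)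
    ultimately have "e = (a (Y l) - a (Y j)) / (of_nat j - of_nat l)" by (simp add: field_simps)
    then show False using e jl by auto
  qed
  moreover have "a (Y j) + e * of_nat (Suc j) \<noteq> 0" if e: "e \<notin> ?S" and j: "j < m" for e j
  proof
    assume "a (Y j) + e * of_nat (Suc j) = 0"
    then have "e * of_nat (Suc j) = - a (Y j)" by (simp add: eq_neg_iff_add_eq_0 add.commute)
    then have "e = - a (Y j) / of_nat (Suc j)" by (simp add: field_simps del: of_nat_Suc)
    then show False using e j by auto
  qed
  ultimately show ?thesis by (intro exI[of _ ?S]) auto
qed

lemma mpoly_fun_eq_if_eq_on_generic_y:
  fixes f g :: pfun
  assumes "f \<in> mpoly_fun V" "g \<in> mpoly_fun V"
    and "\<And>a. generic_y m a \<Longrightarrow> f a = g a"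
  shows "f = g"
proof
  fix a :: point
  obtain S where "finite S" and S: "\<And>e. e \<notin> S \<Longrightarrow> inj_on (\<lambda>j. a (Y j) + e * of_nat (Suc j)) {..<m}
      \<and> 0 \<notin> (\<lambda>j. a (Y j) + e * of_nat (Suc j)) ` {..<m}"
    using generic_y_on_line[of a m] by blast
  let ?b = "\<lambda>v. case v of X i \<Rightarrow> 0 | Y j \<Rightarrow> of_nat (Suc j)"
  show "f a = g a"
  proof (rule mpoly_fun_eq_on_line[OF assms(1,2) \<open>finite S\<close>, of a ?b])
    fix e assume "e \<notin> S"
    then show "f (\<lambda>v. a v + e * ?b v) = g (\<lambda>v. a v + e * ?b v)"
      using S assms(3) by (simp add: generic_y_def)
  qed
qed

lemma alternant_square_lagrange:
  assumes "1 \<le> m" "generic_y m a"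
  shows "alternant m id a * (\<Prod>j<m. lagrange_coeff (\<lambda>j. a (Y j)) m j) * alternant m id a
    = det (flip_mat m)"
  using det_shifted_mat[OF assms, of 0 id] det_shifted_mat_0[of m a] by (simp add: delta_row_def)

lemma alternant_id_nonzero:
  assumes "1 \<le> m" "generic_y m a"
  shows "alternant m id a \<noteq> 0"
  using alternant_square_lagrange[OF assms] det_flip_mat_square[of m] by auto

lemma bialternant_formula:
  assumes "1 \<le> m" "generic_y m a"
  shows "det (flip_mat m) * det (shifted_mat n m \<beta> a) = delta n m a * alternant m \<beta> a / alternant m id a"
proof -
  let ?C = "\<Prod>j<m. lagrange_coeff (\<lambda>j. a (Y j)) m j"
  let ?A = "alternant m id a" and ?J = "det (flip_mat m)"
  have "?J * det (shifted_mat n m \<beta> a) * ?A = ?J * (?A * ?C * ?A) * delta n m a * alternant m \<beta> a"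
    unfolding det_shifted_mat[OF assms] delta_def by (simp add: prod.distrib mult_ac)
  also have "?A * ?C * ?A = ?J" by (rule alternant_square_lagrange[OF assms])
  also have "?J * ?J = 1" by (rule det_flip_mat_square)
  finally show ?thesis using alternant_id_nonzero[OF assms] by (simp add: field_simps id_def)
qed

text \<open>Multiplying a symmetric \<open>h(y)\<close> by the Vandermonde alternant gives an antisymmetric
  polynomial, i.e.\ a combination of alternants \<open>a\<^sub>\<beta>\<close>; by the bialternant formula the same
  combination of determinants of shifted coefficients equals \<open>\<Delta> \<cdot> h\<close>.\<close>
theorem delta_mult_ysym_in_super_alg:
  assumes h: "h \<in> mpoly_fun (Y ` {..<m})" and sym: "perm_invariant permY m h"
  shows "(\<lambda>a. delta n m a * h a) \<in> super_alg n m"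
proof (cases "m = 0")
  case True
  then obtain c where "h = (\<lambda>a. c)" using h mpoly_fun_empty by auto
  then show ?thesis using True subalgebra_const[OF subalgebra_super_alg] by (simp add: delta_def)
next
  case False
  then have m: "1 \<le> m" by simp
  have "(\<lambda>a. h a * alternant m id a) \<in> mpoly_fun (Y ` {..<m})"
    by (intro mpoly_fun_mult h alternant_mpoly_fun)
  moreover have "h (permY \<sigma> a) * alternant m id (permY \<sigma> a) = of_int (sign \<sigma>) * (h a * alternant m id a)"
    if "\<sigma> permutes {..<m}" for \<sigma> a
    using sym that by (simp add: perm_invariant_def alternant_permY)
  ultimately obtain L
    where L: "\<And>a. fact m * (h a * alternant m id a) = (\<Sum>x\<leftarrow>L. fst x * alternant m (snd x) a)"
    using antisymmetric_eq_alternants by blast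
  define R where
    "R a = inverse (fact m) * (\<Sum>x\<leftarrow>L. fst x * (det (flip_mat m) * det (shifted_mat n m (snd x) a)))" for a
  have R: "R \<in> super_alg n m" unfolding R_def[abs_def] using subalgebra_super_alg
    by (intro subalgebra_cmult subalgebra_sum_list det_shifted_mat_in_super_alg)
  have "R a = delta n m a * h a" if "generic_y m a" for a
  proof -
    have "R a = inverse (fact m) * (\<Sum>x\<leftarrow>L. fst x * (delta n m a * alternant m (snd x) a / alternant m id a))"
      by (simp add: R_def bialternant_formula[OF m that])
    also have "\<dots> = delta n m a / (fact m * alternant m id a) * (\<Sum>x\<leftarrow>L. fst x * alternant m (snd x) a)"
      using alternant_id_nonzero[OF m that] by (induction L) (simp_all add: field_simps)
    also have "\<dots> = delta n m a * h a"
      using alternant_id_nonzero[OF m that] by (simp add: L[symmetric])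
    finally show ?thesis .
  qed
  moreover have "(\<lambda>a. delta n m a * h a) \<in> mpoly_fun (avars n m)"
    by (intro mpoly_fun_mult delta_mpoly_fun mpoly_fun_mono[OF h]) (auto simp: avars_def)
  ultimately have "R = (\<lambda>a. delta n m a * h a)"
    using super_alg_mpoly_fun[OF R] by (intro mpoly_fun_eq_if_eq_on_generic_y) blast+
  with R show ?thesis by simp
qed

section \<open>Polynomials symmetric in \<open>x\<close> and in \<open>y\<close>\<close>

definition ysym :: "nat \<Rightarrow> pfun set" where
  "ysym m = {h \<in> mpoly_fun (Y ` {..<m}). perm_invariant permY m h}"

lemma subalgebra_ysym: "subalgebra (ysym m)"
  unfolding subalgebra_def ysym_def perm_invariant_def
  by (auto intro: mpoly_fun_const mpoly_fun_add mpoly_fun_mult)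

definition ext_alg :: "nat \<Rightarrow> nat \<Rightarrow> pfun set" where
  "ext_alg n m = alg_gen (super_alg n m \<union> ysym m)"

lemmas subalgebra_ext_alg = subalgebra_alg_gen[of "super_alg n m \<union> ysym m", folded ext_alg_def] for n m

lemma super_alg_subset_ext_alg: "super_alg n m \<subseteq> ext_alg n m"
  and ysym_subset_ext_alg: "ysym m \<subseteq> ext_alg n m"
  unfolding ext_alg_def by (auto intro: alg_gen.gen)

lemma delta_mult_ext_alg_in_super_alg:
  "k \<in> ext_alg n m \<Longrightarrow> (\<lambda>a. delta n m a * k a) \<in> super_alg n m"
  unfolding ext_alg_def
  by (rule alg_gen_union_mult[OF subalgebra_super_alg subalgebra_ysym])
     (auto simp: ysym_def intro: delta_mult_ysym_in_super_alg)

lemma coeffs_in_inverse_prod_Y: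
  "coeffs_in (ysym m) (\<lambda>a. inverse (\<Prod>j<m. 1 - fps_const (a (Y j)) * fps_X))"
  unfolding coeffs_in_def ysym_def
proof (intro allI CollectI conjI)
  fix k
  have "coeffs_in (mpoly_fun (Y ` {..<m})) (\<lambda>a. inverse (\<Prod>j<m. 1 - fps_const (a (Y j)) * fps_X))"
    using subalgebra_mpoly_fun
    by (intro coeffs_in_inverse coeffs_in_prod coeffs_in_linear mpoly_fun.var)
       (simp_all add: fps_nth_prod_linear_0)
  then show "(\<lambda>a. fps_nth (inverse (\<Prod>j<m. 1 - fps_const (a (Y j)) * fps_X)) k) \<in> mpoly_fun (Y ` {..<m})"
    unfolding coeffs_in_def by blast
  have "(\<Prod>j<m. 1 - fps_const (a (Y (\<sigma> j))) * fps_X) = (\<Prod>j<m. 1 - fps_const (a (Y j)) * fps_X)"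
    if "\<sigma> permutes {..<m}" for \<sigma> and a :: point
    using prod.permute[OF that, of "\<lambda>j. 1 - fps_const (a (Y j)) * fps_X"] by (simp add: o_def)
  then show "perm_invariant permY m (\<lambda>a. fps_nth (inverse (\<Prod>j<m. 1 - fps_const (a (Y j)) * fps_X)) k)"
    unfolding perm_invariant_def by simp
qed

text \<open>\<open>1 / \<Prod>(1 - x\<^sub>i t) = E(t)\<^sup>-\<^sup>1 \<cdot> 1 / \<Prod>(1 - y\<^sub>j t)\<close>.\<close>
lemma coeffs_in_inverse_prod_X:
  "coeffs_in (ext_alg n m) (\<lambda>a. inverse (\<Prod>i<n. 1 - fps_const (a (X i)) * fps_X))"
proof -
  let ?PX = "\<lambda>a. \<Prod>i<n. 1 - fps_const (a (X i)) * fps_X :: complex fps"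
  let ?PY = "\<lambda>a. \<Prod>j<m. 1 - fps_const (a (Y j)) * fps_X :: complex fps"
  have "inverse (?PX a) = inverse (super_series n m a) * inverse (?PY a)" for a
  proof -
    have "inverse (super_series n m a) = inverse (?PX a) * ?PY a"
      unfolding super_series_def fps_inverse_mult by (simp add: fps_nth_prod_linear_0)
    moreover have "?PY a * inverse (?PY a) = 1"
      by (rule inverse_mult_eq_1') (simp add: fps_nth_prod_linear_0)
    ultimately show ?thesis by (simp add: mult.assoc)
  qed
  moreover have "coeffs_in (ext_alg n m) (super_series n m)"
    using super_coeff_in_super_alg super_alg_subset_ext_alg
    unfolding coeffs_in_def super_coeff_def[abs_def] by blast
  then have "coeffs_in (ext_alg n m) (\<lambda>a. inverse (super_series n m a))"
    by (rule coeffs_in_inverse[OF subalgebra_ext_alg]) (simp add: super_series_def fps_nth_prod_linear_0)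
  moreover have "coeffs_in (ext_alg n m) (\<lambda>a. inverse (?PY a))"
    using coeffs_in_inverse_prod_Y ysym_subset_ext_alg unfolding coeffs_in_def by blast
  ultimately show ?thesis by (simp add: coeffs_in_mult[OF subalgebra_ext_alg])
qed

fun swap_var :: "var \<Rightarrow> var" where
  "swap_var (X i) = Y i"
| "swap_var (Y j) = X j"

lemma super_alg_swap_in_ext_alg:
  assumes "g \<in> super_alg 0 n"
  shows "(\<lambda>a. g (a \<circ> swap_var)) \<in> ext_alg n m"
proof -
  have "super_coeff 0 n r (a \<circ> swap_var) = fps_nth (inverse (\<Prod>i<n. 1 - fps_const (a (X i)) * fps_X)) r"
    for r a by (simp add: super_coeff_def super_series_def)
  then have "super_alg 0 n \<subseteq> {g. (\<lambda>a. g (a \<circ> swap_var)) \<in> ext_alg n m}"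
    using coeffs_in_inverse_prod_X[of n m]
    by (intro super_alg_minimal subalgebra_vimage_comp subalgebra_ext_alg) (simp add: coeffs_in_def)
  then show ?thesis using assms by blast
qed

text \<open>The case \<open>n = 0\<close> of \<open>delta_mult_ysym_in_super_alg\<close> is the fundamental theorem on
  symmetric polynomials; swapping \<open>x\<close> and \<open>y\<close> moves it to the \<open>x\<close>-variables.\<close>
lemma xsym_in_ext_alg:
  assumes h: "h \<in> mpoly_fun (X ` {..<n})" and sym: "perm_invariant permX n h"
  shows "h \<in> ext_alg n m"
proof -
  let ?h = "\<lambda>a. h (a \<circ> swap_var)"
  have "?h \<in> mpoly_fun (Y ` {..<n})"
    by (rule mpoly_fun_subst[OF h]) (auto intro: mpoly_fun.var)
  moreover have "perm_invariant permY n ?h"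
  proof -
    have "permY \<sigma> a \<circ> swap_var = permX \<sigma> (a \<circ> swap_var)" for \<sigma> a
      by (rule ext, case_tac x) simp_all
    then show ?thesis using sym by (simp add: perm_invariant_def)
  qed
  ultimately have "(\<lambda>a. delta 0 n a * ?h a) \<in> super_alg 0 n"
    by (rule delta_mult_ysym_in_super_alg)
  then have "(\<lambda>a. ?h (a \<circ> swap_var)) \<in> ext_alg n m"
    by (intro super_alg_swap_in_ext_alg) (simp add: delta_def delta_row_def o_def)
  moreover have "swap_var (swap_var v) = v" for v by (cases v) simp_all
  ultimately show ?thesis by (simp add: o_def)
qed

definition sym_avg :: "((nat \<Rightarrow> nat) \<Rightarrow> point \<Rightarrow> point) \<Rightarrow> nat \<Rightarrow> pfun \<Rightarrow> pfun" where
  "sym_avg act n f a = inverse (fact n) * (\<Sum>\<tau>\<in>{\<tau>. \<tau> permutes {..<n}}. f (act \<tau> a))"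

lemma sym_avg_eq: "perm_invariant act n f \<Longrightarrow> sym_avg act n f = f"
  by (auto simp: sym_avg_def perm_invariant_def card_permutations fun_eq_iff)

lemma perm_invariant_sym_avg:
  assumes "\<And>\<tau> \<rho> a. act \<tau> (act \<rho> a) = act (\<rho> \<circ> \<tau>) a"
  shows "perm_invariant act n (sym_avg act n f)"
  unfolding perm_invariant_def
proof (intro allI impI)
  fix \<rho> a assume "\<rho> permutes {..<n}"
  then have "(\<Sum>\<tau>\<in>{\<tau>. \<tau> permutes {..<n}}. f (act (\<rho> \<circ> \<tau>) a)) = (\<Sum>\<tau>\<in>{\<tau>. \<tau> permutes {..<n}}. f (act \<tau> a))"
    by (rule setum_permutations_compose_left[symmetric])
  then show "sym_avg act n f (act \<rho> a) = sym_avg act n f a"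
    by (simp add: sym_avg_def assms)
qed

lemma sym_avg_mpoly_fun:
  assumes "f \<in> mpoly_fun V" "\<And>\<tau> v. \<tau> permutes {..<n} \<Longrightarrow> v \<in> V \<Longrightarrow> (\<lambda>a. act \<tau> a v) \<in> mpoly_fun V"
  shows "sym_avg act n f \<in> mpoly_fun V"
  unfolding sym_avg_def[abs_def]
  by (intro mpoly_fun_cmult mpoly_fun_sum mpoly_fun_subst[OF assms(1)] assms(2)) auto

lemma sym_avg_sum_list_mult:
  assumes "\<And>x \<tau> a. x \<in> set L \<Longrightarrow> \<tau> permutes {..<n} \<Longrightarrow> F x (act \<tau> a) = F x a"
  shows "sym_avg act n (\<lambda>a. \<Sum>x\<leftarrow>L. F x a * G x a) a = (\<Sum>x\<leftarrow>L. F x a * sym_avg act n (G x) a)"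
proof -
  have "(\<Sum>\<tau>\<in>{\<tau>. \<tau> permutes {..<n}}. \<Sum>x\<leftarrow>L. F x (act \<tau> a) * G x (act \<tau> a))
      = (\<Sum>x\<leftarrow>L. F x a * (\<Sum>\<tau>\<in>{\<tau>. \<tau> permutes {..<n}}. G x (act \<tau> a)))"
    unfolding sum_sum_list_swap sum_distrib_left
    by (intro arg_cong[where f = sum_list] map_cong refl sum.cong) (simp_all add: assms)
  then show ?thesis by (simp add: sym_avg_def sum_list_const_mult[symmetric] mult.left_commute)
qed

lemma permX_mpoly_fun:
    "\<tau> permutes {..<n} \<Longrightarrow> v \<in> X ` {..<n} \<union> Y ` J \<Longrightarrow> (\<lambda>a. permX \<tau> a v) \<in> mpoly_fun (X ` {..<n} \<union> Y ` J)"
  and permY_mpoly_fun: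
    "\<tau> permutes {..<m} \<Longrightarrow> v \<in> X ` I \<union> Y ` {..<m} \<Longrightarrow> (\<lambda>a. permY \<tau> a v) \<in> mpoly_fun (X ` I \<union> Y ` {..<m})"
  by (auto intro!: mpoly_fun.var imageI simp: permutes_lessThan_less)

text \<open>Averaging the monomial expansion in \<open>y\<close> over permutations of \<open>y\<close>, and then its
  \<open>x\<close>-coefficients over permutations of \<open>x\<close>, separates the variables.\<close>
lemma doubly_sym_separated:
  assumes k: "k \<in> mpoly_fun (avars n m)"
    and symX: "perm_invariant permX n k" and symY: "perm_invariant permY m k"
  shows "\<exists>L. (\<forall>x\<in>set L. fst x \<in> ysym m \<and> snd x \<in> mpoly_fun (X ` {..<n})
      \<and> perm_invariant permX n (snd x)) \<and> k = (\<lambda>a. \<Sum>x\<leftarrow>L. fst x a * snd x a)"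
proof -
  let ?U = "X ` {..<n}" and ?W = "Y ` {..<m}"
  obtain L where L: "\<forall>x\<in>set L. fst x \<in> mpoly_fun ?U"
    and k_eq: "k = (\<lambda>a. \<Sum>x\<leftarrow>L. fst x a * monom_fun ?W (snd x) a)"
    using mpoly_fun_expansion[OF k, of ?U ?W] by (auto simp: avars_def)
  define C where "C x = sym_avg permX n (fst x)" for x :: "pfun \<times> (var \<Rightarrow> nat)"
  define M where "M x = sym_avg permY m (monom_fun ?W (snd x))" for x :: "pfun \<times> (var \<Rightarrow> nat)"
  have M: "M x \<in> ysym m" for x
    unfolding M_def ysym_def using permY_mpoly_fun[where I = "{}"]
    by (simp add: sym_avg_mpoly_fun mpoly_fun_monom_fun perm_invariant_sym_avg permY_permY)
  have C: "C x \<in> mpoly_fun ?U" "perm_invariant permX n (C x)" if "x \<in> set L" for x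
    unfolding C_def using L that permX_mpoly_fun[where J = "{}"]
    by (simp_all add: sym_avg_mpoly_fun perm_invariant_sym_avg permX_permX)
  have "k a = sym_avg permY m k a" for a by (simp add: sym_avg_eq[OF symY])
  also have "\<dots> a = (\<Sum>x\<leftarrow>L. fst x a * M x a)" for a
    unfolding M_def k_eq[abs_def]
  proof (rule sym_avg_sum_list_mult)
    fix x \<tau> a assume "x \<in> set L"
    then have "fst x \<in> mpoly_fun ?U" using L by blast
    then show "fst x (permY \<tau> a) = fst x a" by (rule mpoly_fun_cong) auto
  qed
  finally have k_eq': "k = (\<lambda>a. \<Sum>x\<leftarrow>L. M x a * fst x a)" by (simp add: fun_eq_iff mult.commute)
  have "k a = sym_avg permX n k a" for a by (simp add: sym_avg_eq[OF symX])
  also have "\<dots> a = (\<Sum>x\<leftarrow>L. M x a * C x a)" for a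
    unfolding C_def k_eq'
  proof (rule sym_avg_sum_list_mult)
    fix x \<tau> a
    have "M x \<in> mpoly_fun ?W" using M by (simp add: ysym_def)
    then show "M x (permX \<tau> a) = M x a" by (rule mpoly_fun_cong) auto
  qed
  finally have "k = (\<lambda>a. \<Sum>x\<leftarrow>map (\<lambda>x. (M x, C x)) L. fst x a * snd x a)"
    by (simp add: o_def fun_eq_iff)
  then show ?thesis using M C by (intro exI[of _ "map (\<lambda>x. (M x, C x)) L"]) auto
qed

lemma doubly_sym_in_ext_alg:
  assumes "k \<in> mpoly_fun (avars n m)" "perm_invariant permX n k" "perm_invariant permY m k"
  shows "k \<in> ext_alg n m"
proof -
  obtain L where L: "\<forall>x\<in>set L. fst x \<in> ysym m \<and> snd x \<in> mpoly_fun (X ` {..<n})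
      \<and> perm_invariant permX n (snd x)" and k: "k = (\<lambda>a. \<Sum>x\<leftarrow>L. fst x a * snd x a)"
    using doubly_sym_separated[OF assms] by blast
  have "fst x \<in> ext_alg n m" "snd x \<in> ext_alg n m" if "x \<in> set L" for x
    using L that ysym_subset_ext_alg xsym_in_ext_alg by blast+
  then show ?thesis unfolding k
    by (intro subalgebra_sum_list[OF subalgebra_ext_alg] subalgebra_mult[OF subalgebra_ext_alg])
qed

corollary delta_mult_sym_in_super_alg:
  assumes "k \<in> mpoly_fun (avars n m)" "perm_invariant permX n k" "perm_invariant permY m k"
  shows "(\<lambda>a. delta n m a * k a) \<in> super_alg n m"
  by (rule delta_mult_ext_alg_in_super_alg[OF doubly_sym_in_ext_alg[OF assms]])

section \<open>Generators of the supersymmetric polynomials\<close>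

lemma cofactor_vanishes:
  fixes g :: pfun
  assumes g: "g \<in> mpoly_fun V" and ne: "(j, i) \<noteq> (j0, i0)"
    and h: "\<And>a. a (Y j) = a (X i) \<Longrightarrow> (a (Y j0) - a (X i0)) * g a = 0"
    and a: "a (Y j) = a (X i)"
  shows "g a = 0"
proof -
  \<comment> \<open>move along a line inside the hyperplane \<open>y\<^sub>j = x\<^sub>i\<close> on which \<open>y\<^sub>j\<^sub>0 - x\<^sub>i\<^sub>0\<close> is not constant\<close>
  define b :: point
    where "b v = (if v = Y j \<or> v = X i then 1 else 0) + (if v = Y j0 \<and> j0 \<noteq> j then 2 else 0)" for v
  define s :: complex where "s = b (Y j0) - b (X i0)"
  have "s \<noteq> 0" using ne by (cases "j0 = j") (auto simp: s_def b_def)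
  show ?thesis
  proof (rule mpoly_fun_zero_on_line[OF g, of "{- (a (Y j0) - a (X i0)) / s}" a b])
    fix e assume e: "e \<notin> {- (a (Y j0) - a (X i0)) / s}"
    let ?c = "\<lambda>v. a v + e * b v"
    have "?c (Y j) = ?c (X i)" using a by (auto simp: b_def)
    then have "(?c (Y j0) - ?c (X i0)) * g ?c = 0" by (rule h)
    moreover have "?c (Y j0) - ?c (X i0) = a (Y j0) - a (X i0) + e * s"
      by (simp add: s_def algebra_simps)
    moreover have "a (Y j0) - a (X i0) + e * s \<noteq> 0"
      using e \<open>s \<noteq> 0\<close> by (auto simp: field_simps eq_neg_iff_add_eq_0)
    ultimately show "g ?c = 0" by simp
  qed simp
qed

lemma prod_diffs_divides:
  assumes "finite P" "P \<subseteq> {..<m} \<times> {..<n}" "h \<in> mpoly_fun (avars n m)"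
    and "\<And>j i a. (j, i) \<in> P \<Longrightarrow> a (Y j) = a (X i) \<Longrightarrow> h a = 0"
  shows "\<exists>k\<in>mpoly_fun (avars n m). \<forall>a. h a = (\<Prod>(j, i)\<in>P. a (Y j) - a (X i)) * k a"
  using assms
proof (induction P arbitrary: h rule: finite_induct)
  case (insert p P)
  obtain j0 i0 where p: "p = (j0, i0)" by (cases p)
  then have "j0 < m" "i0 < n" using insert.prems(1) by auto
  have "\<exists>g\<in>mpoly_fun (avars n m). h = (\<lambda>a. (a (Y j0) - a (X i0)) * g a)"
  proof (rule mpoly_fun_divide[OF insert.prems(2)])
    show "Y j0 \<in> avars n m" "(\<lambda>a. a (X i0)) \<in> mpoly_fun (avars n m)"
      using \<open>j0 < m\<close> \<open>i0 < n\<close> by (auto simp: avars_def intro: mpoly_fun.var)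
    show "h a = 0" if "a (Y j0) = a (X i0)" for a
      using insert.prems(3)[of j0 i0 a] that p by simp
  qed simp
  then obtain g where g: "g \<in> mpoly_fun (avars n m)" and hg: "h = (\<lambda>a. (a (Y j0) - a (X i0)) * g a)"
    by blast
  have "g a = 0" if "(j, i) \<in> P" "a (Y j) = a (X i)" for j i a
  proof (rule cofactor_vanishes[OF g _ _ that(2)])
    show "(j, i) \<noteq> (j0, i0)" using that(1) insert.hyps(2) p by auto
    show "(b (Y j0) - b (X i0)) * g b = 0" if "b (Y j) = b (X i)" for b
      using insert.prems(3)[of j i b] \<open>(j, i) \<in> P\<close> that hg by simp
  qed
  then obtain k where k: "k \<in> mpoly_fun (avars n m)" "\<forall>a. g a = (\<Prod>(j, i)\<in>P. a (Y j) - a (X i)) * k a"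
    using insert.IH[OF _ g] insert.prems(1) by blast
  have "h a = (\<Prod>(j, i)\<in>insert p P. a (Y j) - a (X i)) * k a" for a
    using insert.hyps k(2) hg p by (simp add: mult.assoc)
  then show ?case using k(1) by blast
qed auto

lemma delta_eq_prod_pairs: "delta n m a = (\<Prod>(j, i)\<in>{..<m} \<times> {..<n}. a (Y j) - a (X i))"
  unfolding delta_def delta_row_def by (simp add: prod.cartesian_product)

lemma delta_divides:
  assumes "h \<in> mpoly_fun (avars n m)" "\<And>a i j. i < n \<Longrightarrow> j < m \<Longrightarrow> a (Y j) = a (X i) \<Longrightarrow> h a = 0"
  shows "\<exists>k\<in>mpoly_fun (avars n m). h = (\<lambda>a. delta n m a * k a)"
proof -
  have "\<exists>k\<in>mpoly_fun (avars n m). \<forall>a. h a = (\<Prod>(j, i)\<in>{..<m} \<times> {..<n}. a (Y j) - a (X i)) * k a"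
    by (rule prod_diffs_divides) (use assms in auto)
  then show ?thesis unfolding delta_eq_prod_pairs by (auto simp: fun_eq_iff)
qed

lemma delta_permX: "\<sigma> permutes {..<n} \<Longrightarrow> delta n m (permX \<sigma> a) = delta n m a"
  unfolding delta_def delta_row_def
  using prod.permute[of \<sigma> "{..<n}" "\<lambda>i. a (Y _) - a (X i)"] by (simp add: o_def)

lemma delta_permY: "\<sigma> permutes {..<m} \<Longrightarrow> delta n m (permY \<sigma> a) = delta n m a"
  unfolding delta_def delta_row_def
  using prod.permute[of \<sigma> "{..<m}" "\<lambda>j. \<Prod>i<n. a (Y j) - a (X i)"] by (simp add: o_def)

text \<open>\<open>\<Delta>\<close> is not a zero divisor: along the line in direction \<open>x\<^sub>i = i + 1, y\<^sub>j = - (j + 1)\<close>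
  each factor \<open>y\<^sub>j - x\<^sub>i\<close> vanishes at most once.\<close>
lemma delta_mult_cancel:
  fixes k k' :: pfun
  assumes "k \<in> mpoly_fun V" "k' \<in> mpoly_fun V" "\<And>a. delta n m a * k a = delta n m a * k' a"
  shows "k = k'"
proof
  fix a :: point
  define b :: point where "b v = (case v of X i \<Rightarrow> of_nat (Suc i) | Y j \<Rightarrow> - of_nat (Suc j))" for v
  let ?S = "(\<lambda>(j, i). (a (Y j) - a (X i)) / of_nat (j + i + 2)) ` ({..<m} \<times> {..<n})"
  show "k a = k' a"
  proof (rule mpoly_fun_eq_on_line[OF assms(1,2), of ?S a b])
    fix e assume e: "e \<notin> ?S"
    have "a (Y j) + e * b (Y j) - (a (X i) + e * b (X i)) \<noteq> 0" if "j < m" "i < n" for j i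
    proof
      assume "a (Y j) + e * b (Y j) - (a (X i) + e * b (X i)) = 0"
      then have "e * of_nat (j + i + 2) = a (Y j) - a (X i)" by (simp add: b_def algebra_simps)
      then have "e = (a (Y j) - a (X i)) / of_nat (j + i + 2)"
        by (simp add: field_simps del: of_nat_add of_nat_Suc)
      with e that show False by auto
    qed
    then have "delta n m (\<lambda>v. a v + e * b v) \<noteq> 0" by (simp add: delta_def delta_row_def)
    then show "k (\<lambda>v. a v + e * b v) = k' (\<lambda>v. a v + e * b v)"
      using assms(3)[of "\<lambda>v. a v + e * b v"] by simp
  qed simp
qed

lemma delta_quotient_sym:
  assumes k: "k \<in> mpoly_fun (avars n m)"
    and symX: "perm_invariant permX n (\<lambda>a. delta n m a * k a)"
    and symY: "perm_invariant permY m (\<lambda>a. delta n m a * k a)"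
  shows "perm_invariant permX n k" "perm_invariant permY m k"
proof -
  show "perm_invariant permX n k" unfolding perm_invariant_def
  proof (intro allI impI)
    fix \<sigma> a assume \<sigma>: "\<sigma> permutes {..<n}"
    have k\<sigma>: "(\<lambda>a. k (permX \<sigma> a)) \<in> mpoly_fun (avars n m)"
      using mpoly_fun_subst[OF k permX_mpoly_fun[OF \<sigma>, of _ "{..<m}", folded avars_def]] .
    have "delta n m a * k (permX \<sigma> a) = delta n m a * k a" for a
      using symX \<sigma> by (simp add: perm_invariant_def delta_permX)
    with k\<sigma> k have "(\<lambda>a. k (permX \<sigma> a)) = k" by (rule delta_mult_cancel)
    then show "k (permX \<sigma> a) = k a" by (rule fun_cong)
  qed
  show "perm_invariant permY m k" unfolding perm_invariant_def
  proof (intro allI impI)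
    fix \<sigma> a assume \<sigma>: "\<sigma> permutes {..<m}"
    have k\<sigma>: "(\<lambda>a. k (permY \<sigma> a)) \<in> mpoly_fun (avars n m)"
      using mpoly_fun_subst[OF k permY_mpoly_fun[OF \<sigma>, of _ "{..<n}", folded avars_def]] .
    have "delta n m a * k (permY \<sigma> a) = delta n m a * k a" for a
      using symY \<sigma> by (simp add: perm_invariant_def delta_permY)
    with k\<sigma> k have "(\<lambda>a. k (permY \<sigma> a)) = k" by (rule delta_mult_cancel)
    then show "k (permY \<sigma> a) = k a" by (rule fun_cong)
  qed
qed

lemma supersym_vanishing_in_super_alg:
  assumes h: "h \<in> supersym n m"
    and vanish: "\<And>a i j. i < n \<Longrightarrow> j < m \<Longrightarrow> a (Y j) = a (X i) \<Longrightarrow> h a = 0"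
  shows "h \<in> super_alg n m"
proof -
  have "\<exists>k\<in>mpoly_fun (avars n m). h = (\<lambda>a. delta n m a * k a)"
    using h by (intro delta_divides vanish) (auto simp: supersym_def)
  then obtain k where k: "k \<in> mpoly_fun (avars n m)" and hk: "h = (\<lambda>a. delta n m a * k a)" ..
  have "perm_invariant permX n k" "perm_invariant permY m k"
    using delta_quotient_sym[OF k] h unfolding hk by (auto simp: supersym_def)
  then show ?thesis unfolding hk using k by (intro delta_mult_sym_in_super_alg)
qed

lemma permX_upd_fixed:
  assumes "\<sigma> permutes {..<n}"
  shows "(permX \<sigma> a)(X n := c) = permX \<sigma> (a(X n := c))"
proof
  fix v show "((permX \<sigma> a)(X n := c)) v = permX \<sigma> (a(X n := c)) v"
  proof (cases v)
    case (X k)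
    have "\<sigma> n = n" using permutes_not_in[OF assms] by simp
    then have "\<sigma> k = n \<longleftrightarrow> k = n" using permutes_inj[OF assms] by (metis injD)
    then show ?thesis using X by auto
  qed simp
qed

lemma supersym_restrict:
  assumes f: "f \<in> supersym (Suc n) m"
  shows "(\<lambda>a. f (a(X n := 0))) \<in> supersym n m"
proof -
  have fm: "f \<in> mpoly_fun (avars (Suc n) m)" and fX: "perm_invariant permX (Suc n) f"
    and fY: "perm_invariant permY m f" and fc: "cancellation (Suc n) m f"
    using f by (auto simp: supersym_def)
  have "(\<lambda>a. (a(X n := 0)) v) \<in> mpoly_fun (avars n m)" if "v \<in> avars (Suc n) m" for v
    using that by (cases "v = X n") (auto simp: avars_def less_Suc_eq intro: mpoly_fun_const mpoly_fun.var)
  then have "(\<lambda>a. f (a(X n := 0))) \<in> mpoly_fun (avars n m)" by (rule mpoly_fun_subst[OF fm])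
  moreover have "perm_invariant permX n (\<lambda>a. f (a(X n := 0)))"
    unfolding perm_invariant_def
  proof (intro allI impI)
    fix \<sigma> a assume \<sigma>: "\<sigma> permutes {..<n}"
    then have "\<sigma> permutes {..<Suc n}" by (rule permutes_subset) auto
    then show "f ((permX \<sigma> a)(X n := 0)) = f (a(X n := 0))"
      using fX by (simp add: permX_upd_fixed[OF \<sigma>] perm_invariant_def)
  qed
  moreover have "(permY \<sigma> a)(X n := 0) = permY \<sigma> (a(X n := 0))" for \<sigma> a
    by (rule ext, case_tac x) simp_all
  then have "perm_invariant permY m (\<lambda>a. f (a(X n := 0)))"
    using fY by (simp add: perm_invariant_def)
  moreover have "cancellation n m (\<lambda>a. f (a(X n := 0)))"
    unfolding cancellation_def
  proof (intro impI allI)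
    fix a s t assume "0 < n" "0 < m"
    then have "a(X 0 := c, Y 0 := c, X n := 0) = (a(X n := 0))(X 0 := c, Y 0 := c)" for c :: complex
      by (auto simp: fun_upd_twist)
    then show "f (a(X 0 := s, Y 0 := s, X n := 0)) = f (a(X 0 := t, Y 0 := t, X n := 0))"
      using fc \<open>0 < m\<close> by (simp add: cancellation_def)
  qed
  ultimately show ?thesis by (simp add: supersym_def)
qed

text \<open>If a supersymmetric \<open>h\<close> vanishes at \<open>x\<^sub>n = 0\<close>, then by symmetry at every \<open>x\<^sub>i = 0\<close>, and
  by the cancellation property on every hyperplane \<open>y\<^sub>j = x\<^sub>i\<close>.\<close>
lemma supersym_vanishes_on_hyperplanes:
  assumes h: "h \<in> supersym (Suc n) m" and h0: "\<And>a. h (a(X n := 0)) = 0"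
    and ij: "i < Suc n" "j < m" and eq: "a (Y j) = a (X i)"
  shows "h a = 0"
proof -
  have hX: "perm_invariant permX (Suc n) h" and hY: "perm_invariant permY m h"
    and hc: "cancellation (Suc n) m h"
    using h by (auto simp: supersym_def)
  have zero: "h b = 0" if "i' < Suc n" "b (X i') = 0" for b i'
  proof -
    let ?b = "permX (Transposition.transpose i' n) b"
    have "Transposition.transpose i' n permutes {..<Suc n}" using that by (intro permutes_swap_id) auto
    then have "h b = h ?b" using hX by (simp add: perm_invariant_def)
    also have "?b = ?b(X n := 0)" using that by (auto simp: fun_eq_iff)
    also have "h \<dots> = 0" by (rule h0)
    finally show ?thesis .
  qed
  let ?t = "Transposition.transpose 0 i" and ?r = "Transposition.transpose 0 j"
  let ?b = "permY ?r (permX ?t a)"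
  have "?t permutes {..<Suc n}" "?r permutes {..<m}" using ij by (auto intro: permutes_swap_id)
  then have "h a = h ?b" using hX hY by (simp add: perm_invariant_def)
  also have "?b = ?b(X 0 := a (X i), Y 0 := a (X i))" using eq by (auto simp: fun_eq_iff)
  also have "h \<dots> = h (?b(X 0 := 0, Y 0 := 0))" using hc ij by (simp add: cancellation_def)
  also have "\<dots> = 0" by (rule zero[of 0]) auto
  finally show ?thesis .
qed

theorem supersym_eq_super_alg: "supersym n m = super_alg n m"
proof
  show "supersym n m \<subseteq> super_alg n m"
  proof (induction n)
    case 0
    show ?case
    proof
      fix f assume "f \<in> supersym 0 m"
      then show "f \<in> super_alg 0 m" by (rule supersym_vanishing_in_super_alg) simp
    qed
  next
    case (Suc n)
    show ?case
    proof
      fix f assume f: "f \<in> supersym (Suc n) m"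
      then have "(\<lambda>a. f (a(X n := 0))) \<in> super_alg n m" using Suc.IH supersym_restrict by blast
      then obtain G where G: "G \<in> super_alg (Suc n) m" and G0: "\<forall>a. G (a(X n := 0)) = f (a(X n := 0))"
        by (blast dest: super_alg_lift)
      have h: "(\<lambda>a. f a - G a) \<in> supersym (Suc n) m"
        using f G super_alg_subset_supersym by (intro subalgebra_diff[OF subalgebra_supersym]) auto
      then have "(\<lambda>a. f a - G a) \<in> super_alg (Suc n) m"
      proof (rule supersym_vanishing_in_super_alg)
        fix a :: point and i j assume "i < Suc n" "j < m" "a (Y j) = a (X i)"
        then show "f a - G a = 0" by (rule supersym_vanishes_on_hyperplanes[OF h, rotated]) (simp add: G0)
      qed
      then have "(\<lambda>a. G a + (f a - G a)) \<in> super_alg (Suc n) m"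
        using G by (intro subalgebra_add[OF subalgebra_super_alg])
      then show "f \<in> super_alg (Suc n) m" by simp
    qed
  qed
qed (rule super_alg_subset_supersym)

section \<open>Restriction from \<open>h\<^sup>*\<close> to \<open>a\<^sup>*\<close>\<close>

lemma monom_fun_flip:
  assumes "finite W" "w \<in> W"
  shows "monom_fun W \<beta> (a(w := - a w)) = (-1) ^ \<beta> w * monom_fun W \<beta> a"
proof -
  have "monom_fun W \<beta> (a(w := - a w)) = (\<Prod>v\<in>W. (if v = w then (-1) ^ \<beta> w else 1) * a v ^ \<beta> v)"
    unfolding monom_fun_def by (intro prod.cong refl) (simp add: power_minus[of "a w"])
  also have "\<dots> = (-1) ^ \<beta> w * monom_fun W \<beta> a"
    using assms by (simp add: monom_fun_def prod.distrib prod.delta)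
  finally show ?thesis .
qed

text \<open>Averaging over the sign change of \<open>w\<close> removes the monomials odd in \<open>w\<close>.\<close>
lemma even_monomials:
  assumes W: "finite W" and flip: "\<And>v a. v \<in> W \<Longrightarrow> f (a(v := - a v)) = f a"
    and f: "\<And>a. f a = (\<Sum>x\<leftarrow>L. fst x * monom_fun W (snd x) a)"
  shows "f a = (\<Sum>x\<leftarrow>L. if \<forall>w\<in>W. even (snd x w) then fst x * monom_fun W (snd x) a else 0)"
proof -
  have "f a = (\<Sum>x\<leftarrow>L. if \<forall>w\<in>W'. even (snd x w) then fst x * monom_fun W (snd x) a else 0)"
    if "W' \<subseteq> W" for W'
    using finite_subset[OF that W] that
  proof (induction W' arbitrary: a rule: finite_induct)
    case empty
    show ?case by (simp add: f)
  next
    case (insert w W')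
    let ?T = "\<lambda>x a. if \<forall>w\<in>W'. even (snd x w) then fst x * monom_fun W (snd x) a else 0"
    have w: "w \<in> W" using insert.prems by simp
    have IH: "f b = (\<Sum>x\<leftarrow>L. ?T x b)" for b using insert.IH insert.prems by simp
    have "f a = (f a + f (a(w := - a w))) / 2" using flip[OF w] by simp
    also have "\<dots> = ((\<Sum>x\<leftarrow>L. ?T x a) + (\<Sum>x\<leftarrow>L. ?T x (a(w := - a w)))) / 2"
      by (simp only: IH)
    also have "\<dots> = (\<Sum>x\<leftarrow>L. (?T x a + ?T x (a(w := - a w))) / 2)"
      by (induction L) (simp_all add: field_simps)
    also have "\<dots> = (\<Sum>x\<leftarrow>L. if \<forall>w\<in>insert w W'. even (snd x w) then fst x * monom_fun W (snd x) a else 0)"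
    proof (intro arg_cong[where f = sum_list] map_cong refl)
      fix x
      show "(?T x a + ?T x (a(w := - a w))) / 2
          = (if \<forall>w\<in>insert w W'. even (snd x w) then fst x * monom_fun W (snd x) a else 0)"
        by (cases "even (snd x w)") (auto simp: monom_fun_flip[OF W w])
    qed
    finally show ?case .
  qed
  then show ?thesis by blast
qed

definition square_pt :: "point \<Rightarrow> point" where
  "square_pt b = (\<lambda>v. (b v)\<^sup>2)"

definition sqrt_pt :: "point \<Rightarrow> point" where
  "sqrt_pt a = (\<lambda>v. csqrt (a v))"

lemma square_sqrt_pt [simp]: "square_pt (sqrt_pt a) = a"
  by (simp add: square_pt_def sqrt_pt_def)

lemma square_pt_permX: "square_pt (permX \<sigma> b) = permX \<sigma> (square_pt b)"
  and square_pt_permY: "square_pt (permY \<sigma> b) = permY \<sigma> (square_pt b)"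
  and square_pt_upd: "square_pt (b(v := c)) = (square_pt b)(v := c\<^sup>2)"
  by (auto simp: fun_eq_iff square_pt_def permX_def permY_def split: var.split)

text \<open>Every element of \<open>\<Lambda>\<^sup>0(a\<^sup>*)\<close> is even in each variable, hence a polynomial in the squares;
  the cancellation property of \<open>\<Lambda>\<^sup>0\<close> at \<open>x\<^sub>1 = - y\<^sub>1\<close> becomes that of supersymmetric polynomials
  in the squares, because \<open>f\<close> is also even in \<open>y\<^sub>1\<close>.\<close>
lemma Lambda0_a_imp_supersym_square:
  assumes f: "f \<in> Lambda0_a p q" and "1 \<le> q"
  shows "\<exists>F\<in>supersym p q. f = (\<lambda>b. F (square_pt b))"
proof -
  let ?W = "avars p q"
  have fin: "finite ?W" by (simp add: avars_def)
  have fm: "f \<in> mpoly_fun ?W" and fX: "perm_invariant permX p f" and fY: "perm_invariant permY q f"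
    and flip: "\<And>v a. v \<in> ?W \<Longrightarrow> f (a(v := - a v)) = f a"
    and fc: "\<And>a t s. f (a(X 0 := t, Y 0 := - t)) = f (a(X 0 := s, Y 0 := - s))"
    using f unfolding Lambda0_a_def perm_invariant_def by auto
  obtain L where L: "\<And>a. f a = (\<Sum>x\<leftarrow>L. fst x * monom_fun ?W (snd x) a)"
    using mpoly_fun_monom_expansion[OF fm order.refl fin] by blast
  define F where "F a = (\<Sum>x\<leftarrow>L. if \<forall>w\<in>?W. even (snd x w)
      then fst x * monom_fun ?W (\<lambda>w. snd x w div 2) a else 0)" for a
  have F_square: "F (square_pt b) = f b" for b
  proof -
    have "monom_fun ?W (\<lambda>w. snd x w div 2) (square_pt b) = monom_fun ?W (snd x) b"
      if "\<forall>w\<in>?W. even (snd x w)" for x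
      unfolding monom_fun_def square_pt_def
      by (intro prod.cong refl) (use that in \<open>auto simp: power_mult[symmetric]\<close>)
    then have "F (square_pt b)
        = (\<Sum>x\<leftarrow>L. if \<forall>w\<in>?W. even (snd x w) then fst x * monom_fun ?W (snd x) b else 0)"
      unfolding F_def by (intro arg_cong[where f = sum_list] map_cong refl) auto
    also have "\<dots> = f b" by (rule even_monomials[OF fin flip L, symmetric])
    finally show ?thesis .
  qed
  have F_sqrt: "F a = f (sqrt_pt a)" for a using F_square[of "sqrt_pt a"] by simp
  have "F \<in> mpoly_fun ?W"
    unfolding F_def[abs_def]
  proof (rule mpoly_fun_sum_list)
    fix x
    show "(\<lambda>a. if \<forall>w\<in>?W. even (snd x w) then fst x * monom_fun ?W (\<lambda>w. snd x w div 2) a else 0)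
        \<in> mpoly_fun ?W"
    proof (cases "\<forall>w\<in>?W. even (snd x w)")
      case True
      show ?thesis unfolding if_P[OF True] by (rule mpoly_fun_cmult[OF mpoly_fun_monom_fun[OF fin]])
    next
      case False
      show ?thesis unfolding if_not_P[OF False] by (rule mpoly_fun_const)
    qed
  qed
  moreover have "perm_invariant permX p F"
    using fX unfolding perm_invariant_def F_sqrt
    by (metis F_sqrt F_square square_pt_permX square_sqrt_pt)
  moreover have "perm_invariant permY q F"
    using fY unfolding perm_invariant_def
    by (metis F_sqrt F_square square_pt_permY square_sqrt_pt)
  moreover have "cancellation p q F"
    unfolding cancellation_def
  proof (intro impI allI)
    fix a s t
    have Y0: "Y 0 \<in> ?W" using \<open>1 \<le> q\<close> by (auto simp: avars_def)
    have "F (a(X 0 := u, Y 0 := u)) = f ((sqrt_pt a)(X 0 := 0, Y 0 := - 0))" for u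
    proof -
      let ?r = "(sqrt_pt a)(X 0 := csqrt u, Y 0 := csqrt u)"
      have "F (a(X 0 := u, Y 0 := u)) = f ?r"
        using F_square[of ?r] by (simp add: square_pt_upd)
      also have "\<dots> = f (?r(Y 0 := - ?r (Y 0)))" by (rule flip[OF Y0, symmetric])
      also have "?r(Y 0 := - ?r (Y 0)) = (sqrt_pt a)(X 0 := csqrt u, Y 0 := - csqrt u)" by simp
      also have "f \<dots> = f ((sqrt_pt a)(X 0 := 0, Y 0 := - 0))" by (rule fc)
      finally show ?thesis .
    qed
    then show "F (a(X 0 := s, Y 0 := s)) = F (a(X 0 := t, Y 0 := t))" by simp
  qed
  ultimately have "F \<in> supersym p q" by (simp add: supersym_def)
  moreover have "f = (\<lambda>b. F (square_pt b))" using F_square by simp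
  ultimately show ?thesis by blast
qed

lemma prod_lessThan_double:
  fixes f :: "nat \<Rightarrow> 'a::comm_monoid_mult"
  shows "(\<Prod>k<2 * p. f k) = (\<Prod>i<p. f i * f (p + i))"
proof -
  have "{..<2 * p} = {..<p} \<union> (\<lambda>i. p + i) ` {..<p}"
  proof
    show "{..<2 * p} \<subseteq> {..<p} \<union> (\<lambda>i. p + i) ` {..<p}"
    proof
      fix k assume "k \<in> {..<2 * p}"
      then show "k \<in> {..<p} \<union> (\<lambda>i. p + i) ` {..<p}"
        by (cases "k < p") (auto intro!: image_eqI[of _ _ "k - p"])
    qed
  qed auto
  then have "(\<Prod>k<2 * p. f k) = (\<Prod>k<p. f k) * (\<Prod>k\<in>(\<lambda>i. p + i) ` {..<p}. f k)"
    by (simp only:) (rule prod.union_disjoint, auto)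
  also have "(\<Prod>k\<in>(\<lambda>i. p + i) ` {..<p}. f k) = (\<Prod>i<p. f (p + i))"
    by (subst prod.reindex) auto
  finally show ?thesis by (simp add: prod.distrib)
qed

lemma fps_nth_compose_X_square: "fps_nth (E oo fps_X ^ 2) (2 * r) = fps_nth E r"
proof -
  have "fps_nth (E oo fps_X ^ 2) (2 * r) = (\<Sum>i=0..2*r. fps_nth E i * (if 2 * r = 2 * i then 1 else 0))"
    by (simp add: fps_compose_nth power_mult[symmetric])
  also have "\<dots> = (\<Sum>i=0..2*r. if i = r then fps_nth E i else 0)"
    by (intro sum.cong refl) auto
  finally show ?thesis by (simp add: sum.delta)
qed

text \<open>If the second half of the variables is the negative of the first half, the factors of
  \<^const>\<open>super_series\<close> pair up as \<open>(1 - c t) (1 + c t) = 1 - c\<^sup>2 t\<^sup>2\<close>.\<close>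
lemma super_series_double:
  assumes X: "\<And>i. i < p \<Longrightarrow> c (X (p + i)) = - c (X i)"
    and Y: "\<And>j. j < q \<Longrightarrow> c (Y (q + j)) = - c (Y j)"
  shows "super_series (2 * p) (2 * q) c = super_series p q (square_pt c) oo fps_X ^ 2"
proof -
  have X2: "fps_nth (fps_X ^ 2 :: complex fps) 0 = 0" by simp
  have pair: "(1 - fps_const u * fps_X) * (1 - fps_const (- u) * fps_X)
      = (1 - fps_const (u\<^sup>2) * fps_X :: complex fps) oo fps_X ^ 2" for u
  proof -
    have "(1 - fps_const u * fps_X) * (1 - fps_const (- u) * fps_X)
        = (1 - fps_const (u\<^sup>2) * fps_X ^ 2 :: complex fps)"
      by (simp add: algebra_simps power2_eq_square fps_const_mult)
    also have "\<dots> = (1 - fps_const (u\<^sup>2) * fps_X) oo fps_X ^ 2"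
      by (simp add: fps_compose_sub_distrib fps_compose_mult_distrib[OF X2])
    finally show ?thesis .
  qed
  have "(\<Prod>k<2 * p. 1 - fps_const (c (X k)) * fps_X)
      = (\<Prod>i<p. 1 - fps_const ((c (X i))\<^sup>2) * fps_X) oo fps_X ^ 2"
    unfolding prod_lessThan_double fps_compose_prod_distrib[OF X2] by (intro prod.cong) (simp_all add: X pair)
  moreover have "(\<Prod>k<2 * q. 1 - fps_const (c (Y k)) * fps_X)
      = (\<Prod>j<q. 1 - fps_const ((c (Y j))\<^sup>2) * fps_X) oo fps_X ^ 2"
    unfolding prod_lessThan_double fps_compose_prod_distrib[OF X2] by (intro prod.cong) (simp_all add: Y pair)
  moreover have "inverse (\<Prod>j<q. 1 - fps_const ((c (Y j))\<^sup>2) * fps_X) oo fps_X ^ 2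
      = inverse ((\<Prod>j<q. 1 - fps_const ((c (Y j))\<^sup>2) * fps_X) oo fps_X ^ 2)"
    by (rule fps_inverse_compose[OF X2]) (simp add: fps_nth_prod_linear_0)
  ultimately show ?thesis
    unfolding super_series_def square_pt_def fps_compose_mult_distrib[OF X2] by simp
qed

text \<open>The generators of \<open>\<Lambda>(h\<^sup>*)\<close> are coefficients of \<^const>\<open>super_series\<close> at the rescaled point
  \<open>x\<^sub>k \<mapsto> 2 x\<^sub>k, y\<^sub>k \<mapsto> -2 y\<^sub>k\<close>: the sign turns the condition at \<open>x\<^sub>+\<^sub>1 = t, y\<^sub>+\<^sub>1 = -t\<close> into
  the cancellation property, and the factor \<open>2\<close> undoes the \<open>1/2\<close> in \<^const>\<open>restr_pt\<close>.\<close>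
definition lift_pt :: "point \<Rightarrow> point" where
  "lift_pt a = (\<lambda>v. case v of X k \<Rightarrow> 2 * a (X k) | Y k \<Rightarrow> - 2 * a (Y k))"

definition lift_coeff :: "nat \<Rightarrow> nat \<Rightarrow> nat \<Rightarrow> pfun" where
  "lift_coeff p q r a = super_coeff (2 * p) (2 * q) (2 * r) (lift_pt a)"

lemma Res_lift_coeff: "Res p q (lift_coeff p q r) = (\<lambda>b. super_coeff p q r (square_pt b))"
proof
  fix b
  let ?c = "lift_pt (restr_pt p q b)"
  have "super_series (2 * p) (2 * q) ?c = super_series p q (square_pt ?c) oo fps_X ^ 2"
    by (rule super_series_double) (simp_all add: lift_pt_def restr_pt_def)
  also have "super_series p q (square_pt ?c) = super_series p q (square_pt b)"
    unfolding super_series_def by (simp add: lift_pt_def restr_pt_def square_pt_def power2_eq_square)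
  finally show "Res p q (lift_coeff p q r) b = super_coeff p q r (square_pt b)"
    by (simp add: Res_def lift_coeff_def super_coeff_def fps_nth_compose_X_square)
qed

lemma lift_coeff_in_Lambda_h:
  assumes "1 \<le> p" "1 \<le> q"
  shows "lift_coeff p q r \<in> Lambda_h p q"
proof -
  have "(\<lambda>a. lift_pt a v) \<in> mpoly_fun (hvars p q)" if "v \<in> avars (2 * p) (2 * q)" for v
    using that by (auto simp: lift_pt_def avars_def hvars_def
        intro!: mpoly_fun_cmult mpoly_fun_cmult[of _ _ "- 2", simplified] mpoly_fun.var)
  then have "lift_coeff p q r \<in> mpoly_fun (hvars p q)"
    unfolding lift_coeff_def[abs_def] by (rule mpoly_fun_subst[OF super_coeff_mpoly_fun])
  moreover have "lift_pt (permX \<sigma> a) = permX \<sigma> (lift_pt a)" "lift_pt (permY \<sigma> a) = permY \<sigma> (lift_pt a)"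
    for \<sigma> a by (auto simp: fun_eq_iff lift_pt_def split: var.split)
  moreover have "lift_pt (a(X 0 := t, Y 0 := - t)) = (lift_pt a)(X 0 := 2 * t, Y 0 := 2 * t)" for a t
    by (auto simp: fun_eq_iff lift_pt_def split: var.split)
  ultimately show ?thesis
    using assms unfolding Lambda_h_def lift_coeff_def super_coeff_def
    by (simp add: super_series_permX super_series_permY super_series_cancel del: fun_upd_apply)
qed

lemma subalgebra_Lambda_h: "subalgebra (Lambda_h p q)"
  unfolding subalgebra_def Lambda_h_def
  by (auto intro: mpoly_fun_const mpoly_fun_add mpoly_fun_mult) metis+

lemma super_alg_square_in_Res_image:
  assumes "1 \<le> p" "1 \<le> q" "F \<in> super_alg p q"
  shows "(\<lambda>b. F (square_pt b)) \<in> Res p q ` Lambda_h p q"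
proof -
  have Res: "Res p q = (\<lambda>G b. G (restr_pt p q b))" by (simp add: fun_eq_iff Res_def)
  have "super_alg p q \<subseteq> {F. (\<lambda>b. F (square_pt b)) \<in> Res p q ` Lambda_h p q}"
  proof (rule super_alg_minimal)
    show "subalgebra {F. (\<lambda>b. F (square_pt b)) \<in> Res p q ` Lambda_h p q}"
      unfolding Res by (intro subalgebra_vimage_comp subalgebra_image_comp subalgebra_Lambda_h)
    fix r show "super_coeff p q r \<in> {F. (\<lambda>b. F (square_pt b)) \<in> Res p q ` Lambda_h p q}"
      using lift_coeff_in_Lambda_h[OF assms(1,2)] Res_lift_coeff by (auto intro!: image_eqI)
  qed
  then show ?thesis using assms(3) by blast
qed

text \<open>A permutation of \<open>x\<^sub>1,\<dots>,x\<^sub>p\<close> acts on \<open>x\<^sub>\<plusminus>\<^sub>1,\<dots>,x\<^sub>\<plusminus>\<^sub>p\<close> by permuting both halves.\<close>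
definition double_perm :: "nat \<Rightarrow> (nat \<Rightarrow> nat) \<Rightarrow> nat \<Rightarrow> nat" where
  "double_perm p \<sigma> k = (if k < p then \<sigma> k else if k < 2 * p then p + \<sigma> (k - p) else k)"

lemma double_perm_inv:
  assumes \<sigma>: "\<sigma> permutes {..<p}" and k: "k < 2 * p"
  shows "double_perm p (Hilbert_Choice.inv \<sigma>) (double_perm p \<sigma> k) = k" and "double_perm p \<sigma> k < 2 * p"
proof -
  show "double_perm p (Hilbert_Choice.inv \<sigma>) (double_perm p \<sigma> k) = k"
  proof (cases "k < p")
    case False
    then have "k - p < p" using k by simp
    then show ?thesis
      using False k permutes_lessThan_less[OF \<sigma>] permutes_inverses(2)[OF \<sigma>] by (simp add: double_perm_def)
  qed (simp add: double_perm_def permutes_lessThan_less[OF \<sigma>] permutes_inverses(2)[OF \<sigma>])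
  show "double_perm p \<sigma> k < 2 * p"
  proof (cases "k < p")
    case True
    then show ?thesis using permutes_lessThan_less[OF \<sigma> True] by (simp add: double_perm_def)
  next
    case False
    then have "k - p < p" using k by simp
    then show ?thesis using False k permutes_lessThan_less[OF \<sigma>] by (simp add: double_perm_def)
  qed
qed

lemma double_perm_permutes:
  assumes \<sigma>: "\<sigma> permutes {..<p}"
  shows "double_perm p \<sigma> permutes {..<2 * p}"
proof (rule bij_imp_permutes)
  have \<sigma>': "Hilbert_Choice.inv \<sigma> permutes {..<p}" using \<sigma> by (rule permutes_inv)
  show "bij_betw (double_perm p \<sigma>) {..<2 * p} {..<2 * p}"
    by (rule bij_betwI[where g = "double_perm p (Hilbert_Choice.inv \<sigma>)"])
       (use double_perm_inv[OF \<sigma>] double_perm_inv[OF \<sigma>'] permutes_inv_inv[OF \<sigma>] in auto)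
qed (simp add: double_perm_def)

lemma restr_pt_permX:
  assumes \<sigma>: "\<sigma> permutes {..<p}"
  shows "restr_pt p q (permX \<sigma> b) = permX (double_perm p \<sigma>) (restr_pt p q b)"
proof
  fix v show "restr_pt p q (permX \<sigma> b) v = permX (double_perm p \<sigma>) (restr_pt p q b) v"
  proof (cases v)
    case (X k)
    have "k - p < p" if "\<not> k < p" "k < 2 * p" using that by simp
    moreover have "\<sigma> (k - p) = k - p" if "\<not> k < 2 * p" using permutes_not_in[OF \<sigma>] that by simp
    ultimately show ?thesis
      using X permutes_lessThan_less[OF \<sigma>] by (auto simp: restr_pt_def double_perm_def)
  qed (simp add: restr_pt_def)
qed

lemma restr_pt_permY:
  assumes \<sigma>: "\<sigma> permutes {..<q}"
  shows "restr_pt p q (permY \<sigma> b) = permY (double_perm q \<sigma>) (restr_pt p q b)"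
proof
  fix v show "restr_pt p q (permY \<sigma> b) v = permY (double_perm q \<sigma>) (restr_pt p q b) v"
  proof (cases v)
    case (Y k)
    have "k - q < q" if "\<not> k < q" "k < 2 * q" using that by simp
    moreover have "\<sigma> (k - q) = k - q" if "\<not> k < 2 * q" using permutes_not_in[OF \<sigma>] that by simp
    ultimately show ?thesis
      using Y permutes_lessThan_less[OF \<sigma>] by (auto simp: restr_pt_def double_perm_def)
  qed (simp add: restr_pt_def)
qed

lemma restr_pt_flipX:
  "i < p \<Longrightarrow> restr_pt p q (b(X i := - b (X i))) = permX (Transposition.transpose i (p + i)) (restr_pt p q b)"
  and restr_pt_flipY:
  "j < q \<Longrightarrow> restr_pt p q (b(Y j := - b (Y j))) = permY (Transposition.transpose j (q + j)) (restr_pt p q b)"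
  by (auto simp: fun_eq_iff restr_pt_def Transposition.transpose_def split: var.split)

lemma Lambda_h_cancel_pair:
  assumes G: "G \<in> Lambda_h p q" and k: "k < 2 * p" and l: "l < 2 * q"
  shows "G (a(X k := s, Y l := - s)) = G (a(X k := 0, Y l := 0))"
proof -
  have GX: "\<And>\<sigma> a. \<sigma> permutes {..<2*p} \<Longrightarrow> G (permX \<sigma> a) = G a"
    and GY: "\<And>\<sigma> a. \<sigma> permutes {..<2*q} \<Longrightarrow> G (permY \<sigma> a) = G a"
    and Gc: "\<And>a t s. G (a(X 0 := t, Y 0 := - t)) = G (a(X 0 := s, Y 0 := - s))"
    using G unfolding Lambda_h_def by auto
  let ?t = "Transposition.transpose 0 k" and ?r = "Transposition.transpose 0 l"
  have t: "?t permutes {..<2*p}" and r: "?r permutes {..<2*q}"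
    using k l by (auto intro: permutes_swap_id)
  let ?c = "permY ?r (permX ?t a)"
  have move: "permY ?r (permX ?t (a(X k := u, Y l := - u))) = ?c(X 0 := u, Y 0 := - u)" for u
  proof
    fix v show "permY ?r (permX ?t (a(X k := u, Y l := - u))) v = (?c(X 0 := u, Y 0 := - u)) v"
      by (cases v) (auto simp: Transposition.transpose_def)
  qed
  have "G (a(X k := s, Y l := - s)) = G (?c(X 0 := s, Y 0 := - s))"
    using GX[OF t] GY[OF r] by (simp only: move[symmetric])
  also have "\<dots> = G (?c(X 0 := 0, Y 0 := - 0))" by (rule Gc)
  also have "\<dots> = G (a(X k := 0, Y l := - 0))"
    using GX[OF t] GY[OF r] by (simp only: move[symmetric])
  finally show ?thesis by simp
qed

lemma Res_mpoly_fun: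
  assumes "G \<in> mpoly_fun (hvars p q)"
  shows "Res p q G \<in> mpoly_fun (avars p q)"
  unfolding Res_def
proof (rule mpoly_fun_subst[OF assms])
  have scaled: "(\<lambda>b. b w / c) \<in> mpoly_fun (avars p q)" "(\<lambda>b. - (b w / c)) \<in> mpoly_fun (avars p q)"
    if "w \<in> avars p q" for c w
    using mpoly_fun_cmult[OF mpoly_fun.var[OF that], of "1 / c"]
      mpoly_fun_cmult[OF mpoly_fun.var[OF that], of "- 1 / c"] by simp_all
  fix v assume v: "v \<in> hvars p q"
  show "(\<lambda>b. restr_pt p q b v) \<in> mpoly_fun (avars p q)"
  proof (cases v)
    case (X k)
    then have "k < 2 * p" using v by (auto simp: hvars_def)
    then have "(\<lambda>b. restr_pt p q b v) = (\<lambda>b. (1 / 2) * b (X k)) \<and> k < p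
        \<or> (\<lambda>b. restr_pt p q b v) = (\<lambda>b. (- 1 / 2) * b (X (k - p))) \<and> k - p < p"
      using X by (cases "k < p") (auto simp: restr_pt_def)
    then show ?thesis using scaled[of "X k"] scaled[of "X (k - p)"] by (auto simp: avars_def)
  next
    case (Y k)
    then have "k < 2 * q" using v by (auto simp: hvars_def)
    then have "(\<lambda>b. restr_pt p q b v) = (\<lambda>b. (1 / 2) * b (Y k)) \<and> k < q
        \<or> (\<lambda>b. restr_pt p q b v) = (\<lambda>b. (- 1 / 2) * b (Y (k - q))) \<and> k - q < q"
      using Y by (cases "k < q") (auto simp: restr_pt_def)
    then show ?thesis using scaled[of "Y k"] scaled[of "Y (k - q)"] by (auto simp: avars_def)
  qed
qed

lemma Res_Lambda_h_cancel:
  assumes p: "1 \<le> p" and q: "1 \<le> q" and G: "G \<in> Lambda_h p q"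
  shows "Res p q G (b(X 0 := t, Y 0 := - t)) = Res p q G (b(X 0 := s, Y 0 := - s))"
proof -
  let ?c = "restr_pt p q b"
  have "Res p q G (b(X 0 := u, Y 0 := - u)) = G ((?c(X 0 := 0, Y 0 := 0))(X p := 0, Y q := 0))" for u
  proof -
    \<comment> \<open>\<open>x\<^sub>1 = u, y\<^sub>1 = -u\<close> restricts to \<open>x\<^sub>+\<^sub>1 = u/2, y\<^sub>+\<^sub>1 = -u/2\<close> and \<open>x\<^sub>-\<^sub>1 = -u/2, y\<^sub>-\<^sub>1 = u/2\<close>:
      two cancelling pairs\<close>
    have "restr_pt p q (b(X 0 := u, Y 0 := - u))
        = (?c(X p := - u / 2, Y q := - (- u / 2)))(X 0 := u / 2, Y 0 := - (u / 2))"
      using p q by (auto simp: fun_eq_iff restr_pt_def split: var.split)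
    then have "Res p q G (b(X 0 := u, Y 0 := - u))
        = G ((?c(X p := - u / 2, Y q := - (- u / 2)))(X 0 := u / 2, Y 0 := - (u / 2)))"
      by (simp only: Res_def)
    also have "\<dots> = G ((?c(X p := - u / 2, Y q := - (- u / 2)))(X 0 := 0, Y 0 := 0))"
      by (rule Lambda_h_cancel_pair[OF G]) (use p q in auto)
    also have "(?c(X p := - u / 2, Y q := - (- u / 2)))(X 0 := 0, Y 0 := 0)
        = (?c(X 0 := 0, Y 0 := 0))(X p := - u / 2, Y q := - (- u / 2))"
      using p q by (auto simp: fun_upd_twist)
    also have "G \<dots> = G ((?c(X 0 := 0, Y 0 := 0))(X p := 0, Y q := 0))"
      by (rule Lambda_h_cancel_pair[OF G]) (use p q in auto)
    finally show ?thesis .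
  qed
  then show ?thesis by simp
qed

lemma Res_in_Lambda0_a:
  assumes p: "1 \<le> p" and q: "1 \<le> q" and G: "G \<in> Lambda_h p q"
  shows "Res p q G \<in> Lambda0_a p q"
proof -
  have GX: "\<And>\<sigma> a. \<sigma> permutes {..<2*p} \<Longrightarrow> G (permX \<sigma> a) = G a"
    and GY: "\<And>\<sigma> a. \<sigma> permutes {..<2*q} \<Longrightarrow> G (permY \<sigma> a) = G a"
    using G unfolding Lambda_h_def by auto
  have "Res p q G \<in> mpoly_fun (avars p q)"
    using G by (intro Res_mpoly_fun) (simp add: Lambda_h_def)
  moreover have "Res p q G (permX \<sigma> b) = Res p q G b" if "\<sigma> permutes {..<p}" for \<sigma> b
    unfolding Res_def restr_pt_permX[OF that] by (rule GX[OF double_perm_permutes[OF that]])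
  moreover have "Res p q G (permY \<sigma> b) = Res p q G b" if "\<sigma> permutes {..<q}" for \<sigma> b
    unfolding Res_def restr_pt_permY[OF that] by (rule GY[OF double_perm_permutes[OF that]])
  moreover have "Res p q G (b(v := - b v)) = Res p q G b" if "v \<in> avars p q" for v b
  proof -
    from that consider i where "v = X i" "i < p" | j where "v = Y j" "j < q" by (auto simp: avars_def)
    then show ?thesis
    proof cases
      case 1
      then have "Transposition.transpose i (p + i) permutes {..<2 * p}" by (intro permutes_swap_id) auto
      then show ?thesis unfolding Res_def 1 restr_pt_flipX[OF 1(2)] by (rule GX)
    next
      case 2
      then have "Transposition.transpose j (q + j) permutes {..<2 * q}" by (intro permutes_swap_id) auto
      then show ?thesis unfolding Res_def 2 restr_pt_flipY[OF 2(2)] by (rule GY)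
    qed
  qed
  moreover have "Res p q G (b(X 0 := t, Y 0 := - t)) = Res p q G (b(X 0 := s, Y 0 := - s))" for b t s
    by (rule Res_Lambda_h_cancel[OF p q G])
  ultimately show ?thesis unfolding Lambda0_a_def by blast
qed

theorem proposition4p2:
  fixes p q :: nat
  assumes "p \<ge> 1" and "q \<ge> 1"
  shows "Res p q ` Lambda_h p q = Lambda0_a p q"
proof
  show "Res p q ` Lambda_h p q \<subseteq> Lambda0_a p q"
    using Res_in_Lambda0_a[OF assms] by blast
  show "Lambda0_a p q \<subseteq> Res p q ` Lambda_h p q"
  proof
    fix f assume "f \<in> Lambda0_a p q"
    then obtain F where F: "F \<in> supersym p q" and f: "f = (\<lambda>b. F (square_pt b))"
      using Lambda0_a_imp_supersym_square assms(2) by blast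
    have "F \<in> super_alg p q" using F supersym_eq_super_alg by blast
    then show "f \<in> Res p q ` Lambda_h p q"
      unfolding f using super_alg_square_in_Res_image[OF assms] by blast
  qed
qed

end
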